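(* Let $k$ be a differential field of characteristic zero with derivations $\Delta=\{\delta_1,\dots,\delta_m\}$, $R=k\{y_1,\ldots,y_l\}$, and fix an orderly ranking. Let $\mathbb{C}=C^1,\dots,C^p$ be a Kolchin characteristic set of a characterizable ideal $[\mathbb{C}]:H_{\mathbb{C}}^\infty$, and let $h$ be an integer at least the maximal order of a derivative appearing in the elements of $\mathbb{C}$. Then, in $R_h=k[\theta y_j:\ \operatorname{ord}\theta\le h]$, $$[\mathbb{C}]:H_{\mathbb{C}}^\infty\cap R_h=\big(\theta C^j:\ 1\le j\le p,\ \theta\in\Theta,\ \operatorname{ord}(\theta u_{C^j})\le h\big):H_{\mathbb{C}}^\infty,$$ where the right-hand side is an ideal of $R_h$. Consequently, if $I=\bigcap_{i=1}^n[\mathbb{C}_i]:H_{\mathbb{C}_i}^\infty$ is a characteristic decomposition w.r.t. the orderly ranking and $h$ bounds the orders of all derivatives appearing in all $\mathbb{C}_i$, then $I\cap R_h=\bigcap_{i=1}^n(\theta C_i^j:\ \operatorname{ord}(\theta u_{C_i^j})\le h):H_{\mathbb{C}_i}^\infty$.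
   Context: $\Theta$ is the free commutative monoid of operators $\theta=\delta_1^{k_1}\cdots\delta_m^{k_m}$, $\operatorname{ord}\theta=\sum k_i$; $R$ is the polynomial ring over $k$ in the derivatives $\theta y_j$, the order of $\theta y_j$ being $\operatorname{ord}\theta$. A ranking is a total order on $\{\theta y_j\}$ with $\theta u\ge u$ and $u\ge v\Rightarrow\theta u\ge\theta v$; orderly if $\operatorname{ord}u>\operatorname{ord}v\Rightarrow u>v$. For $f\notin k$: leader $u_f$ = highest ranked derivative in $f$, initial $I_f$ = leading coefficient in $u_f$, separant $S_f=\partial f/\partial u_f$. $f$ is reduced w.r.t. $g$ if no proper derivative of $u_g$ appears in $f$ and $\deg_{u_g}f<\deg_{u_g}g$. An autoreduced set is a set disjoint from $k$ each of whose elements is reduced w.r.t. the others; elements are listed in increasing rank, autoreduced sets compared lexicographically with a proper extension having lower rank. A (Kolchin) characteristic set of a differential ideal is an autoreduced subset of lowest rank. $H_{\mathbb{A}}$ is the product of all initials and separants of elements of $\mathbb{A}$; $J:S^\infty=\{a:\exists s\in S^\infty, sa\in J\}$ with $S^\infty$ the multiplicative set generated by $S$; $[F]$ is the differential ideal generated by $F$. A radical differential ideal $J$ is characterizable if it has a Kolchin characteristic set $\mathbb{A}$ with $J=[\mathbb{A}]:H_{\mathbb{A}}^\infty$. A characteristic decomposition of a radical differential ideal $I$ is a representation $I=\bigcap_i[\mathbb{C}_i]:H_{\mathbb{C}_i}^\infty$ where each $[\mathbb{C}_i]:H_{\mathbb{C}_i}^\infty$ is characterizable with Kolchin characteristic set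 $\mathbb{C}_i$. *)

theory Defs
  imports Main "HOL-Library.Poly_Mapping"
begin

text \<open>A derivative theta y_j is encoded as a pair (theta, j), where the operator
  theta = delta_1^{k_1} ... delta_m^{k_m} is the finitely supported exponent vector
  (index i < m stands for delta_{i+1}) and j < l stands for y_{j+1}.\<close>

type_synonym dop = "nat \<Rightarrow>\<^sub>0 nat"
type_synonym dvar = "dop \<times> nat"
type_synonym 'k dpoly = "(dvar \<Rightarrow>\<^sub>0 nat) \<Rightarrow>\<^sub>0 'k"

definition diff_field :: "(nat \<Rightarrow> 'k::field_char_0 \<Rightarrow> 'k) \<Rightarrow> nat \<Rightarrow> bool" where
  "diff_field d m \<longleftrightarrow>
     (\<forall>i<m. \<forall>a b. d i (a + b) = d i a + d i b) \<and>
     (\<forall>i<m. \<forall>a b. d i (a * b) = d i a * b + a * d i b) \<and>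
     (\<forall>i<m. \<forall>j<m. \<forall>a. d i (d j a) = d j (d i a))"

definition valid_op :: "nat \<Rightarrow> dop \<Rightarrow> bool" where
  "valid_op m \<theta> \<longleftrightarrow> Poly_Mapping.keys \<theta> \<subseteq> {..<m}"

definition valid_var :: "nat \<Rightarrow> nat \<Rightarrow> dvar \<Rightarrow> bool" where
  "valid_var m l v \<longleftrightarrow> valid_op m (fst v) \<and> snd v < l"

definition op_ord :: "dop \<Rightarrow> nat" where
  "op_ord \<theta> = (\<Sum>i\<in>Poly_Mapping.keys \<theta>. Poly_Mapping.lookup \<theta> i)"

definition var_ord :: "dvar \<Rightarrow> nat" where
  "var_ord v = op_ord (fst v)"

definition apply_op_var :: "dop \<Rightarrow> dvar \<Rightarrow> dvar" where
  "apply_op_var \<theta> v = (\<theta> + fst v, snd v)"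

definition is_proper_derivative :: "dvar \<Rightarrow> dvar \<Rightarrow> bool" where
  "is_proper_derivative v u \<longleftrightarrow> (\<exists>\<theta>. \<theta> \<noteq> 0 \<and> v = apply_op_var \<theta> u)"

definition vars :: "'k::zero dpoly \<Rightarrow> dvar set" where
  "vars p = (\<Union>M\<in>Poly_Mapping.keys p. Poly_Mapping.keys M)"

definition dring :: "nat \<Rightarrow> nat \<Rightarrow> 'k::zero dpoly set" where
  "dring m l = {p. \<forall>v\<in>vars p. valid_var m l v}"

definition dring_h :: "nat \<Rightarrow> nat \<Rightarrow> nat \<Rightarrow> 'k::zero dpoly set" where
  "dring_h m l h = {p \<in> dring m l. \<forall>v\<in>vars p. var_ord v \<le> h}"

definition pvar :: "dvar \<Rightarrow> 'k::{zero,one} dpoly" where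
  "pvar v = Poly_Mapping.single (Poly_Mapping.single v 1) 1"

definition pderiv_var :: "dvar \<Rightarrow> 'k::comm_ring_1 dpoly \<Rightarrow> 'k dpoly" where
  "pderiv_var v p = (\<Sum>M\<in>Poly_Mapping.keys p.
      Poly_Mapping.single (M - Poly_Mapping.single v 1) (Poly_Mapping.lookup p M * of_nat (Poly_Mapping.lookup M v)))"

definition dderiv :: "(nat \<Rightarrow> 'k::comm_ring_1 \<Rightarrow> 'k) \<Rightarrow> nat \<Rightarrow> 'k dpoly \<Rightarrow> 'k dpoly" where
  "dderiv d i p = (\<Sum>M\<in>Poly_Mapping.keys p. Poly_Mapping.single M (d i (Poly_Mapping.lookup p M)))
     + (\<Sum>v\<in>vars p. pderiv_var v p * pvar (apply_op_var (Poly_Mapping.single i 1) v))"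

definition apply_op :: "(nat \<Rightarrow> 'k::comm_ring_1 \<Rightarrow> 'k) \<Rightarrow> nat \<Rightarrow> dop \<Rightarrow> 'k dpoly \<Rightarrow> 'k dpoly" where
  "apply_op d m \<theta> p = foldr (\<lambda>i q. (dderiv d i ^^ Poly_Mapping.lookup \<theta> i) q) [0..<m] p"

definition is_ideal_in :: "'a::comm_ring_1 set \<Rightarrow> 'a set \<Rightarrow> bool" where
  "is_ideal_in S J \<longleftrightarrow> J \<subseteq> S \<and> 0 \<in> J \<and> (\<forall>a\<in>J. \<forall>b\<in>J. a + b \<in> J) \<and> (\<forall>a\<in>J. \<forall>r\<in>S. r * a \<in> J)"

definition ideal_gen :: "'a::comm_ring_1 set \<Rightarrow> 'a set \<Rightarrow> 'a set" where
  "ideal_gen S G = \<Inter>{J. G \<subseteq> J \<and> is_ideal_in S J}"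

definition is_diff_ideal :: "(nat \<Rightarrow> 'k::comm_ring_1 \<Rightarrow> 'k) \<Rightarrow> nat \<Rightarrow> nat \<Rightarrow> 'k dpoly set \<Rightarrow> bool" where
  "is_diff_ideal d m l J \<longleftrightarrow> is_ideal_in (dring m l) J \<and> (\<forall>i<m. \<forall>a\<in>J. dderiv d i a \<in> J)"

definition diff_ideal_gen :: "(nat \<Rightarrow> 'k::comm_ring_1 \<Rightarrow> 'k) \<Rightarrow> nat \<Rightarrow> nat \<Rightarrow> 'k dpoly set \<Rightarrow> 'k dpoly set" where
  "diff_ideal_gen d m l F = \<Inter>{J. F \<subseteq> J \<and> is_diff_ideal d m l J}"

definition saturation :: "'a::comm_ring_1 set \<Rightarrow> 'a set \<Rightarrow> 'a \<Rightarrow> 'a set" where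
  "saturation S J H = {a \<in> S. \<exists>n. H ^ n * a \<in> J}"

definition is_radical_in :: "'a::comm_ring_1 set \<Rightarrow> 'a set \<Rightarrow> bool" where
  "is_radical_in S J \<longleftrightarrow> (\<forall>a\<in>S. \<forall>n. a ^ n \<in> J \<longrightarrow> a \<in> J)"

text \<open>rk u v means u \<le> v in the ranking.\<close>
definition is_ranking :: "nat \<Rightarrow> nat \<Rightarrow> (dvar \<Rightarrow> dvar \<Rightarrow> bool) \<Rightarrow> bool" where
  "is_ranking m l rk \<longleftrightarrow>
     (\<forall>u. valid_var m l u \<longrightarrow> rk u u) \<and>
     (\<forall>u v. valid_var m l u \<longrightarrow> valid_var m l v \<longrightarrow> rk u v \<longrightarrow> rk v u \<longrightarrow> u = v) \<and>
     (\<forall>u v w. valid_var m l u \<longrightarrow> valid_var m l v \<longrightarrow> valid_var m l w \<longrightarrow> rk u v \<longrightarrow> rk v w \<longrightarrow> rk u w) \<and>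
     (\<forall>u v. valid_var m l u \<longrightarrow> valid_var m l v \<longrightarrow> rk u v \<or> rk v u) \<and>
     (\<forall>\<theta> u. valid_op m \<theta> \<longrightarrow> valid_var m l u \<longrightarrow> rk u (apply_op_var \<theta> u)) \<and>
     (\<forall>\<theta> u v. valid_op m \<theta> \<longrightarrow> valid_var m l u \<longrightarrow> valid_var m l v \<longrightarrow> rk v u
                \<longrightarrow> rk (apply_op_var \<theta> v) (apply_op_var \<theta> u))"

definition rk_less :: "(dvar \<Rightarrow> dvar \<Rightarrow> bool) \<Rightarrow> dvar \<Rightarrow> dvar \<Rightarrow> bool" where
  "rk_less rk u v \<longleftrightarrow> rk u v \<and> u \<noteq> v"

definition is_orderly :: "nat \<Rightarrow> nat \<Rightarrow> (dvar \<Rightarrow> dvar \<Rightarrow> bool) \<Rightarrow> bool" where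
  "is_orderly m l rk \<longleftrightarrow> (\<forall>u v. valid_var m l u \<longrightarrow> valid_var m l v \<longrightarrow>
       var_ord v < var_ord u \<longrightarrow> rk_less rk v u)"

definition deg_in :: "dvar \<Rightarrow> 'k::zero dpoly \<Rightarrow> nat" where
  "deg_in v p = Max (insert 0 ((\<lambda>M. Poly_Mapping.lookup M v) ` Poly_Mapping.keys p))"

definition leader :: "(dvar \<Rightarrow> dvar \<Rightarrow> bool) \<Rightarrow> 'k::zero dpoly \<Rightarrow> dvar" where
  "leader rk p = (THE u. u \<in> vars p \<and> (\<forall>v\<in>vars p. rk v u))"

definition lcoeff_in :: "dvar \<Rightarrow> 'k::comm_ring_1 dpoly \<Rightarrow> 'k dpoly" where
  "lcoeff_in u p = (\<Sum>M\<in>{M\<in>Poly_Mapping.keys p. Poly_Mapping.lookup M u = deg_in u p}.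
      Poly_Mapping.single (M - Poly_Mapping.single u (deg_in u p)) (Poly_Mapping.lookup p M))"

definition initial :: "(dvar \<Rightarrow> dvar \<Rightarrow> bool) \<Rightarrow> 'k::comm_ring_1 dpoly \<Rightarrow> 'k dpoly" where
  "initial rk p = lcoeff_in (leader rk p) p"

definition separant :: "(dvar \<Rightarrow> dvar \<Rightarrow> bool) \<Rightarrow> 'k::comm_ring_1 dpoly \<Rightarrow> 'k dpoly" where
  "separant rk p = pderiv_var (leader rk p) p"

definition H_of :: "(dvar \<Rightarrow> dvar \<Rightarrow> bool) \<Rightarrow> 'k::comm_ring_1 dpoly list \<Rightarrow> 'k dpoly" where
  "H_of rk A = prod_list (map (\<lambda>c. initial rk c * separant rk c) A)"

definition reduced_wrt :: "(dvar \<Rightarrow> dvar \<Rightarrow> bool) \<Rightarrow> 'k::zero dpoly \<Rightarrow> 'k dpoly \<Rightarrow> bool" where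
  "reduced_wrt rk f g \<longleftrightarrow>
     (\<forall>v\<in>vars f. \<not> is_proper_derivative v (leader rk g)) \<and>
     deg_in (leader rk g) f < deg_in (leader rk g) g"

definition prank_less :: "(dvar \<Rightarrow> dvar \<Rightarrow> bool) \<Rightarrow> 'k::zero dpoly \<Rightarrow> 'k dpoly \<Rightarrow> bool" where
  "prank_less rk f g \<longleftrightarrow> rk_less rk (leader rk f) (leader rk g) \<or>
     (leader rk f = leader rk g \<and> deg_in (leader rk f) f < deg_in (leader rk g) g)"

definition prank_eq :: "(dvar \<Rightarrow> dvar \<Rightarrow> bool) \<Rightarrow> 'k::zero dpoly \<Rightarrow> 'k dpoly \<Rightarrow> bool" where
  "prank_eq rk f g \<longleftrightarrow> leader rk f = leader rk g \<and> deg_in (leader rk f) f = deg_in (leader rk g) g"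

text \<open>An autoreduced set, listed in increasing rank.  Elements are not in k, i.e. nonconstant.\<close>
definition autoreduced :: "nat \<Rightarrow> nat \<Rightarrow> (dvar \<Rightarrow> dvar \<Rightarrow> bool) \<Rightarrow> 'k::zero dpoly list \<Rightarrow> bool" where
  "autoreduced m l rk A \<longleftrightarrow>
     set A \<subseteq> dring m l \<and> (\<forall>a\<in>set A. vars a \<noteq> {}) \<and>
     (\<forall>i j. i < j \<longrightarrow> j < length A \<longrightarrow> prank_less rk (A ! i) (A ! j)) \<and>
     (\<forall>i j. i < length A \<longrightarrow> j < length A \<longrightarrow> i \<noteq> j \<longrightarrow> reduced_wrt rk (A ! i) (A ! j))"

text \<open>Lexicographic comparison; a proper extension has lower rank.\<close>
definition aset_less :: "(dvar \<Rightarrow> dvar \<Rightarrow> bool) \<Rightarrow> 'k::zero dpoly list \<Rightarrow> 'k dpoly list \<Rightarrow> bool" where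
  "aset_less rk A B \<longleftrightarrow> (\<exists>i. (\<forall>j<i. j < length A \<and> j < length B \<and> prank_eq rk (A ! j) (B ! j)) \<and>
      ((i < length A \<and> i < length B \<and> prank_less rk (A ! i) (B ! i)) \<or>
       (i = length B \<and> i < length A)))"

definition kolchin_char_set :: "nat \<Rightarrow> nat \<Rightarrow> (dvar \<Rightarrow> dvar \<Rightarrow> bool) \<Rightarrow> 'k::zero dpoly set \<Rightarrow> 'k dpoly list \<Rightarrow> bool" where
  "kolchin_char_set m l rk J A \<longleftrightarrow> autoreduced m l rk A \<and> set A \<subseteq> J \<and>
     \<not> (\<exists>B. autoreduced m l rk B \<and> set B \<subseteq> J \<and> aset_less rk B A)"

definition characterizable :: "(nat \<Rightarrow> 'k::field_char_0 \<Rightarrow> 'k) \<Rightarrow> nat \<Rightarrow> nat \<Rightarrow> (dvar \<Rightarrow> dvar \<Rightarrow> bool) \<Rightarrow> 'k dpoly set \<Rightarrow> bool" where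
  "characterizable d m l rk J \<longleftrightarrow> is_diff_ideal d m l J \<and> is_radical_in (dring m l) J \<and>
     (\<exists>A. kolchin_char_set m l rk J A \<and> J = saturation (dring m l) (diff_ideal_gen d m l (set A)) (H_of rk A))"

definition char_ideal :: "(nat \<Rightarrow> 'k::field_char_0 \<Rightarrow> 'k) \<Rightarrow> nat \<Rightarrow> nat \<Rightarrow> (dvar \<Rightarrow> dvar \<Rightarrow> bool) \<Rightarrow> 'k dpoly list \<Rightarrow> 'k dpoly set" where
  "char_ideal d m l rk C = saturation (dring m l) (diff_ideal_gen d m l (set C)) (H_of rk C)"

definition truncated_ideal :: "(nat \<Rightarrow> 'k::field_char_0 \<Rightarrow> 'k) \<Rightarrow> nat \<Rightarrow> nat \<Rightarrow> (dvar \<Rightarrow> dvar \<Rightarrow> bool) \<Rightarrow> nat \<Rightarrow> 'k dpoly list \<Rightarrow> 'k dpoly set" where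
  "truncated_ideal d m l rk h C = saturation (dring_h m l h)
     (ideal_gen (dring_h m l h)
        {apply_op d m \<theta> (C ! j) | \<theta> j. j < length C \<and> valid_op m \<theta> \<and>
            var_ord (apply_op_var \<theta> (leader rk (C ! j))) \<le> h})
     (H_of rk C)"

definition order_bound :: "nat \<Rightarrow> 'k::zero dpoly list \<Rightarrow> bool" where
  "order_bound h C \<longleftrightarrow> (\<forall>c\<in>set C. \<forall>v\<in>vars c. var_ord v \<le> h)"

end

theory Submission
  imports Defs
begin

text \<open>Let \<open>f \<in> [C]:H\<^sup>\<infinity> \<inter> R\<^sub>h\<close>. Reduce \<open>f\<close> with respect to \<open>C\<close>, always eliminating its highest
  unreduced derivative \<open>v\<close>: if \<open>v = \<theta>u\<^sub>j\<close> is a proper derivative of a leader, pseudo-divide by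
  \<open>\<theta>C\<^sup>j = S\<^sub>j v + (terms below v)\<close>; if \<open>v = u\<^sub>j\<close>, pseudo-divide by \<open>C\<^sup>j\<close>. Since \<open>v\<close> occurs in \<open>f\<close>,
  \<open>ord (\<theta>u\<^sub>j) \<le> h\<close>, so the divisor is a truncated generator, and since the ranking is orderly,
  the derivatives of the divisor, which rank at most \<open>v\<close>, have order at most \<open>h\<close>: quotients and
  remainders stay in \<open>R\<^sub>h\<close>. The process ends with
  \<open>H\<^sup>N f \<equiv> X r\<close> modulo the truncated generators, where \<open>r \<in> [C]:H\<^sup>\<infinity>\<close> is reduced with respect to \<open>C\<close>,
  and such an \<open>r\<close> is zero: a nonconstant one could be inserted into \<open>C\<close>, giving an autoreduced
  subset of lower rank, and a nonzero constant would give \<open>1 \<in> [C]:H\<^sup>\<infinity>\<close>, which is impossible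
  because \<open>C\<close> would then consist of linear polynomials \<open>a y\<^sub>j + b\<close> having a common differential
  zero at which \<open>H\<close> does not vanish. The reverse inclusion holds because the truncated generators
  lie in \<open>[C]\<close>.\<close>

section \<open>Polynomials in the derivatives\<close>

abbreviation lookup :: "('a \<Rightarrow>\<^sub>0 'b::zero) \<Rightarrow> 'a \<Rightarrow> 'b" where
  "lookup \<equiv> Poly_Mapping.lookup"

abbreviation keys :: "('a \<Rightarrow>\<^sub>0 'b::zero) \<Rightarrow> 'a set" where
  "keys \<equiv> Poly_Mapping.keys"

abbreviation single :: "'a \<Rightarrow> 'b::zero \<Rightarrow> 'a \<Rightarrow>\<^sub>0 'b" where
  "single \<equiv> Poly_Mapping.single"

lemma poly_mapping_sum_single:
  fixes p :: "'a \<Rightarrow>\<^sub>0 'b::comm_monoid_add"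
  shows "p = (\<Sum>M\<in>keys p. single M (lookup p M))"
proof (rule poly_mapping_eqI)
  fix k
  have "lookup (\<Sum>M\<in>keys p. single M (lookup p M)) k = (\<Sum>M\<in>keys p. lookup p M when M = k)"
    by (simp add: lookup_sum lookup_single)
  also have "\<dots> = lookup p k"
    by (cases "k \<in> keys p") (auto simp: in_keys_iff when_def)
  finally show "lookup p k = lookup (\<Sum>M\<in>keys p. single M (lookup p M)) k" by simp
qed

lemma keys_add_nat: "keys (a + b :: 'a \<Rightarrow>\<^sub>0 nat) = keys a \<union> keys b"
  by (auto simp: in_keys_iff lookup_add)

lemma single_Suc_neq_zero [simp]: "single i (Suc n) \<noteq> 0"
  by (metis lookup_single_eq lookup_zero nat.distinct(1))

lemma finite_vars [simp]: "finite (vars p)"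
  by (simp add: vars_def)

lemma vars_zero [simp]: "vars 0 = {}"
  by (simp add: vars_def)

lemma vars_pvar [simp]: "vars (pvar v :: 'k::comm_ring_1 dpoly) = {v}"
  by (simp add: vars_def pvar_def)

lemma vars_one [simp]: "vars (1 :: 'k::comm_ring_1 dpoly) = {}"
  by (simp add: vars_def)

lemma vars_single: "vars (single M c) \<subseteq> keys M"
  by (simp add: vars_def)

lemma vars_add: "vars (p + q) \<subseteq> vars p \<union> vars q"
  unfolding vars_def using keys_add[of p q] by blast

lemma vars_uminus [simp]: "vars (- p :: 'k::comm_ring_1 dpoly) = vars p"
  by (simp add: vars_def)

lemma vars_diff: "vars (p - q :: 'k::comm_ring_1 dpoly) \<subseteq> vars p \<union> vars q"
  using vars_add[of p "- q"] by simp

lemma vars_mult: "vars (p * q :: 'k::comm_ring_1 dpoly) \<subseteq> vars p \<union> vars q"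
proof
  fix x assume "x \<in> vars (p * q)"
  then obtain M where M: "M \<in> keys (p * q)" "x \<in> keys M"
    unfolding vars_def by blast
  then obtain a b where "M = a + b" "a \<in> keys p" "b \<in> keys q"
    using keys_mult[of p q] by blast
  then show "x \<in> vars p \<union> vars q"
    using M(2) unfolding vars_def by (auto simp: keys_add_nat)
qed

lemma vars_power: "vars (p ^ n :: 'k::comm_ring_1 dpoly) \<subseteq> vars p"
  by (induction n) (use vars_mult in auto)

lemma vars_sum: "vars (sum f A) \<subseteq> (\<Union>a\<in>A. vars (f a))"
  by (induction A rule: infinite_finite_induct) (use vars_add in auto)

lemma vars_prod_list:
  "vars (prod_list (map f xs) :: 'k::comm_ring_1 dpoly) \<subseteq> (\<Union>a\<in>set xs. vars (f a))"
  by (induction xs) (use vars_mult in auto)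

lemma vars_empty_imp_const:
  assumes "vars p = {}"
  shows "p = single 0 (lookup p 0)"
proof (rule poly_mapping_eqI)
  fix M
  have "M \<notin> keys p" if "M \<noteq> 0"
    using assms that unfolding vars_def by auto
  then show "lookup p M = lookup (single 0 (lookup p 0)) M"
    by (cases "M = 0") (auto simp: in_keys_iff lookup_single)
qed

lemma pvar_power: "(pvar v :: 'k::comm_ring_1 dpoly) ^ n = single (single v n) 1"
  by (induction n) (simp_all add: pvar_def mult_single single_add[symmetric] add.commute)

lemma deg_in_le_iff: "deg_in w p \<le> D \<longleftrightarrow> (\<forall>M\<in>keys p. lookup M w \<le> D)"
  by (simp add: deg_in_def)

lemma lookup_le_deg_in: "M \<in> keys p \<Longrightarrow> lookup M w \<le> deg_in w p"
  using deg_in_le_iff by blast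

lemma deg_in_notin: "w \<notin> vars p \<Longrightarrow> deg_in w p = 0"
  unfolding deg_in_le_iff[of w p 0, simplified] vars_def by (auto simp: in_keys_iff)

lemma deg_in_pos: "w \<in> vars p \<Longrightarrow> 0 < deg_in w p"
  unfolding vars_def using lookup_le_deg_in[of _ p w] by (fastforce simp: in_keys_iff)

lemma deg_in_uminus [simp]: "deg_in w (- p :: 'k::comm_ring_1 dpoly) = deg_in w p"
  by (simp add: deg_in_def)

lemma deg_in_add_le: "deg_in w (p + q) \<le> max (deg_in w p) (deg_in w q)"
  unfolding deg_in_le_iff
proof
  fix M assume "M \<in> keys (p + q)"
  then have "M \<in> keys p \<or> M \<in> keys q"
    using keys_add[of p q] by blast
  then show "lookup M w \<le> max (deg_in w p) (deg_in w q)"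
    using lookup_le_deg_in by (metis le_max_iff_disj)
qed

lemma deg_in_diff_le: "deg_in w (p - q :: 'k::comm_ring_1 dpoly) \<le> max (deg_in w p) (deg_in w q)"
  using deg_in_add_le[of w p "- q"] by simp

lemma deg_in_mult_le: "deg_in w (p * q :: 'k::comm_ring_1 dpoly) \<le> deg_in w p + deg_in w q"
  unfolding deg_in_le_iff
proof
  fix M assume "M \<in> keys (p * q)"
  then obtain a b where "M = a + b" "a \<in> keys p" "b \<in> keys q"
    using keys_mult[of p q] by blast
  then show "lookup M w \<le> deg_in w p + deg_in w q"
    by (simp add: lookup_add add_mono lookup_le_deg_in)
qed

lemma deg_in_sum_le: "(\<And>a. a \<in> A \<Longrightarrow> deg_in w (f a) \<le> D) \<Longrightarrow> deg_in w (sum f A) \<le> D"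
  unfolding deg_in_le_iff using keys_sum[of f A] by blast

lemma deg_in_pvar_power: "deg_in v ((pvar v :: 'k::comm_ring_1 dpoly) ^ n) = n"
  by (simp add: deg_in_def pvar_power)

definition coeff_in :: "dvar \<Rightarrow> nat \<Rightarrow> 'k::comm_ring_1 dpoly \<Rightarrow> 'k dpoly" where
  "coeff_in v D f = (\<Sum>M\<in>{M\<in>keys f. lookup M v = D}. single (M - single v D) (lookup f M))"

definition rest_in :: "dvar \<Rightarrow> nat \<Rightarrow> 'k::comm_ring_1 dpoly \<Rightarrow> 'k dpoly" where
  "rest_in v D f = (\<Sum>M\<in>{M\<in>keys f. lookup M v \<noteq> D}. single M (lookup f M))"

lemma lcoeff_in_eq_coeff_in: "lcoeff_in u p = coeff_in u (deg_in u p) p"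
  by (simp add: lcoeff_in_def coeff_in_def)

lemma coeff_in_decomp: "f = coeff_in v D f * pvar v ^ D + rest_in v D (f :: 'k::comm_ring_1 dpoly)"
proof -
  have minus_plus: "M - single v D + single v D = M" if "lookup M v = D" for M :: "dvar \<Rightarrow>\<^sub>0 nat"
    by (rule poly_mapping_eqI) (use that in \<open>auto simp: lookup_add lookup_minus lookup_single when_def\<close>)
  have "coeff_in v D f * pvar v ^ D = (\<Sum>M\<in>{M\<in>keys f. lookup M v = D}. single M (lookup f M))"
    unfolding coeff_in_def pvar_power sum_distrib_right
    by (intro sum.cong) (auto simp: mult_single minus_plus)
  then have "coeff_in v D f * pvar v ^ D + rest_in v D f
      = (\<Sum>M\<in>{M\<in>keys f. lookup M v = D} \<union> {M\<in>keys f. lookup M v \<noteq> D}. single M (lookup f M))"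
    unfolding rest_in_def by (subst sum.union_disjoint) auto
  also have "{M\<in>keys f. lookup M v = D} \<union> {M\<in>keys f. lookup M v \<noteq> D} = keys f"
    by auto
  finally show ?thesis
    using poly_mapping_sum_single[of f] by simp
qed

lemma deg_in_single_le: "deg_in w (single M c) \<le> lookup M w"
  by (simp add: deg_in_le_iff)

lemma vars_coeff_in: "vars (coeff_in v D f) \<subseteq> vars f - {v}"
proof
  fix x assume "x \<in> vars (coeff_in v D f)"
  then obtain M where M: "M \<in> keys f" "lookup M v = D" "x \<in> vars (single (M - single v D) (lookup f M))"
    unfolding coeff_in_def using vars_sum by blast
  then have "x \<in> keys (M - single v D)"
    using vars_single by blast
  then have "x \<in> keys M" "x \<noteq> v"
    using M(2) by (auto simp: in_keys_iff lookup_minus lookup_single)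
  then show "x \<in> vars f - {v}"
    using M(1) unfolding vars_def by blast
qed

lemma vars_rest_in: "vars (rest_in v D f) \<subseteq> vars f"
proof
  fix x assume "x \<in> vars (rest_in v D f)"
  then obtain M where "M \<in> keys f" "x \<in> vars (single M (lookup f M))"
    unfolding rest_in_def using vars_sum by blast
  then show "x \<in> vars f"
    using vars_single unfolding vars_def by blast
qed

lemma deg_in_rest_in_le: "deg_in w (rest_in v D f) \<le> deg_in w f"
  unfolding rest_in_def
  by (intro deg_in_sum_le) (metis (no_types, lifting) mem_Collect_eq deg_in_single_le lookup_le_deg_in le_trans)

lemma deg_in_rest_in_less: "deg_in v f \<le> D \<Longrightarrow> deg_in v (rest_in v D f) \<le> D - 1"
  unfolding rest_in_def
proof (intro deg_in_sum_le)
  fix M assume "deg_in v f \<le> D" "M \<in> {M \<in> keys f. lookup M v \<noteq> D}"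
  then have "lookup M v \<le> D - 1"
    using lookup_le_deg_in[of M f v] by auto
  then show "deg_in v (single M (lookup f M)) \<le> D - 1"
    using deg_in_single_le le_trans by blast
qed

lemma deg_in_coeff_in_le: "w \<noteq> v \<Longrightarrow> deg_in w (coeff_in v D f) \<le> deg_in w f"
  unfolding coeff_in_def
proof (intro deg_in_sum_le)
  fix M assume "w \<noteq> v" "M \<in> {M \<in> keys f. lookup M v = D}"
  then have "lookup (M - single v D) w \<le> deg_in w f"
    using lookup_le_deg_in[of M f w] by (simp add: lookup_minus lookup_single)
  then show "deg_in w (single (M - single v D) (lookup f M)) \<le> deg_in w f"
    using deg_in_single_le le_trans by blast
qed

lemma deg_in_pseudo_division_step_le:
  fixes f I g0 :: "'k::comm_ring_1 dpoly"
  assumes w: "w \<notin> vars I \<union> vars g0 \<union> {v}"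
  shows "deg_in w (I * rest_in v D f - coeff_in v D f * pvar v ^ k * g0) \<le> deg_in w f"
proof -
  have "deg_in w (I * rest_in v D f) \<le> deg_in w f"
    using deg_in_mult_le[of w I "rest_in v D f"] deg_in_notin[of w I] deg_in_rest_in_le[of w v D f] w
    by auto
  moreover have "deg_in w (pvar v ^ k :: 'k dpoly) = 0" "deg_in w g0 = 0"
    using vars_power[of "pvar v" k] w by (auto intro: deg_in_notin)
  then have "deg_in w (coeff_in v D f * pvar v ^ k * g0) \<le> deg_in w f"
    using deg_in_mult_le[of w "coeff_in v D f * pvar v ^ k" g0] deg_in_mult_le[of w "coeff_in v D f" "pvar v ^ k"]
      deg_in_coeff_in_le[of w v D f] w by simp
  ultimately show ?thesis
    using deg_in_diff_le[of w "I * rest_in v D f" "coeff_in v D f * pvar v ^ k * g0"] by linarith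
qed

lemma pseudo_division_step:
  fixes f g I g0 :: "'k::comm_ring_1 dpoly"
  assumes g: "g = I * pvar v ^ e + g0" and I: "v \<notin> vars I" and g0: "deg_in v g0 < e"
    and e: "e \<le> deg_in v f"
  obtains Q f1 where "I * f = f1 + Q * g" "deg_in v f1 < deg_in v f"
    "vars Q \<union> vars f1 \<subseteq> vars f \<union> vars I \<union> vars g0 \<union> {v}"
    "\<And>w. w \<notin> vars I \<union> vars g0 \<union> {v} \<Longrightarrow> deg_in w f1 \<le> deg_in w f"
proof -
  define D where "D = deg_in v f"
  define F where "F = coeff_in v D f"
  define f0 where "f0 = rest_in v D f"
  define P :: "'k dpoly" where "P = pvar v ^ (D - e)"
  define f1 where "f1 = I * f0 - F * P * g0"
  have P: "vars P \<subseteq> {v}" "deg_in v P = D - e"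
    unfolding P_def using vars_power[of "pvar v" "D - e"] by (auto simp: deg_in_pvar_power)
  have vF: "vars F \<subseteq> vars f - {v}" and vf0: "vars f0 \<subseteq> vars f"
    unfolding F_def f0_def by (rule vars_coeff_in vars_rest_in)+
  have "pvar v ^ D = P * (pvar v ^ e :: 'k dpoly)"
    using e unfolding P_def D_def by (simp add: power_add[symmetric])
  then have "f = F * P * pvar v ^ e + f0"
    using coeff_in_decomp[of f v D] unfolding F_def f0_def by (simp add: mult.assoc)
  then have "I * f = f1 + (F * P) * g"
    unfolding f1_def g by (simp add: algebra_simps)
  moreover have "deg_in v f1 < deg_in v f"
  proof -
    have "deg_in v (I * f0) \<le> D - 1"
      using deg_in_mult_le[of v I f0] deg_in_notin[OF I] deg_in_rest_in_less[of v f D]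
      unfolding f0_def D_def by simp
    moreover have "deg_in v F = 0"
      using vF by (blast intro: deg_in_notin)
    then have "deg_in v (F * P * g0) \<le> D - 1"
      using deg_in_mult_le[of v "F * P" g0] deg_in_mult_le[of v F P] P(2) g0 e
      unfolding D_def by linarith
    ultimately have "deg_in v f1 \<le> D - 1"
      using deg_in_diff_le[of v "I * f0" "F * P * g0"] unfolding f1_def by simp
    then show ?thesis
      using e g0 unfolding D_def by linarith
  qed
  moreover have "vars (F * P) \<union> vars f1 \<subseteq> vars f \<union> vars I \<union> vars g0 \<union> {v}"
    unfolding f1_def using vars_diff[of "I * f0" "F * P * g0"] vars_mult[of I f0]
      vars_mult[of "F * P" g0] vars_mult[of F P] vF vf0 P(1) by blast
  moreover have "deg_in w f1 \<le> deg_in w f" if "w \<notin> vars I \<union> vars g0 \<union> {v}" for w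
    unfolding f1_def F_def f0_def P_def using that by (rule deg_in_pseudo_division_step_le)
  ultimately show ?thesis
    using that by blast
qed

lemma pseudo_division:
  fixes f g I g0 :: "'k::comm_ring_1 dpoly"
  assumes g: "g = I * pvar v ^ e + g0" and I: "v \<notin> vars I" and g0: "deg_in v g0 < e"
  shows "\<exists>a q r. I ^ a * f = q * g + r \<and> deg_in v r < e
     \<and> vars q \<union> vars r \<subseteq> vars f \<union> vars I \<union> vars g0 \<union> {v}
     \<and> (\<forall>w. w \<notin> vars I \<union> vars g0 \<union> {v} \<longrightarrow> deg_in w r \<le> deg_in w f)"
proof (induction "deg_in v f" arbitrary: f rule: less_induct)
  case less
  show ?case
  proof (cases "deg_in v f < e")
    case True
    then show ?thesis
      by (intro exI[of _ 0] exI[of _ 0] exI[of _ f]) auto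
  next
    case False
    then obtain Q f1 where step: "I * f = f1 + Q * g" "deg_in v f1 < deg_in v f"
        "vars Q \<union> vars f1 \<subseteq> vars f \<union> vars I \<union> vars g0 \<union> {v}"
        "\<And>w. w \<notin> vars I \<union> vars g0 \<union> {v} \<Longrightarrow> deg_in w f1 \<le> deg_in w f"
      using pseudo_division_step[OF g I g0, of f] by (metis not_less)
    from less.hyps[OF step(2)] obtain a q r where IH: "I ^ a * f1 = q * g + r" "deg_in v r < e"
        "vars q \<union> vars r \<subseteq> vars f1 \<union> vars I \<union> vars g0 \<union> {v}"
        "\<And>w. w \<notin> vars I \<union> vars g0 \<union> {v} \<Longrightarrow> deg_in w r \<le> deg_in w f1"
      by blast
    have "I ^ Suc a * f = I ^ a * (I * f)"
      by (simp add: ac_simps)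
    also have "\<dots> = I ^ a * (f1 + Q * g)"
      using step(1) by simp
    also have "\<dots> = (q + I ^ a * Q) * g + r"
      using IH(1) by (simp add: algebra_simps)
    finally have "I ^ Suc a * f = (q + I ^ a * Q) * g + r" .
    moreover have "vars (q + I ^ a * Q) \<subseteq> vars f \<union> vars I \<union> vars g0 \<union> {v}"
      using IH(3) step(3) vars_add[of q "I ^ a * Q"] vars_mult[of "I ^ a" Q] vars_power[of I a] by blast
    moreover have "\<forall>w. w \<notin> vars I \<union> vars g0 \<union> {v} \<longrightarrow> deg_in w r \<le> deg_in w f"
      using IH(4) step(4) order.trans by blast
    ultimately show ?thesis
      using IH(2,3) step(3) by blast
  qed
qed

section \<open>Partial derivatives, evaluation and the derivations \<open>\<delta>\<^sub>i\<close>\<close>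

definition lin_ext :: "((dvar \<Rightarrow>\<^sub>0 nat) \<Rightarrow> 'k::zero \<Rightarrow> 'b::comm_monoid_add) \<Rightarrow> 'k dpoly \<Rightarrow> 'b" where
  "lin_ext \<phi> p = (\<Sum>M\<in>keys p. \<phi> M (lookup p M))"

lemma lin_ext_superset:
  assumes "finite A" "keys p \<subseteq> A" "\<And>M. \<phi> M 0 = 0"
  shows "lin_ext \<phi> p = (\<Sum>M\<in>A. \<phi> M (lookup p M))"
  unfolding lin_ext_def using assms by (intro sum.mono_neutral_left) (auto simp: in_keys_iff)

lemma lin_ext_add:
  assumes "\<And>M. \<phi> M 0 = 0" "\<And>M a b. \<phi> M (a + b) = \<phi> M a + \<phi> M b"
  shows "lin_ext \<phi> (p + q) = lin_ext \<phi> p + lin_ext \<phi> (q :: 'k::comm_monoid_add dpoly)"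
proof -
  let ?A = "keys p \<union> keys q"
  have "lin_ext \<phi> (p + q) = (\<Sum>M\<in>?A. \<phi> M (lookup (p + q) M))"
    using keys_add[of p q] assms by (intro lin_ext_superset) auto
  also have "\<dots> = (\<Sum>M\<in>?A. \<phi> M (lookup p M)) + (\<Sum>M\<in>?A. \<phi> M (lookup q M))"
    by (simp add: lookup_add assms sum.distrib)
  also have "\<dots> = lin_ext \<phi> p + lin_ext \<phi> q"
    by (simp add: lin_ext_superset[of ?A p \<phi>] lin_ext_superset[of ?A q \<phi>] assms(1))
  finally show ?thesis .
qed

lemma lin_ext_single: "(\<And>M. \<phi> M 0 = 0) \<Longrightarrow> lin_ext \<phi> (single M c) = \<phi> M c"
  unfolding lin_ext_def by auto

lemma lin_ext_sum:
  assumes "\<And>M. \<phi> M 0 = 0" "\<And>M a b. \<phi> M (a + b) = \<phi> M a + \<phi> M b"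
  shows "lin_ext \<phi> (sum f A) = (\<Sum>a\<in>A. lin_ext \<phi> (f a :: 'k::comm_monoid_add dpoly))"
  by (induction A rule: infinite_finite_induct) (simp_all add: lin_ext_add[OF assms] lin_ext_def[of _ 0])

lemma pderiv_var_eq_lin_ext:
  "pderiv_var v p = lin_ext (\<lambda>M c. single (M - single v 1) (c * of_nat (lookup M v))) p"
  unfolding pderiv_var_def lin_ext_def ..

lemma pderiv_var_add: "pderiv_var v (p + q) = pderiv_var v p + pderiv_var v q"
  unfolding pderiv_var_eq_lin_ext by (rule lin_ext_add) (auto simp: single_add distrib_right)

lemma pderiv_var_single: "pderiv_var v (single M c) = single (M - single v 1) (c * of_nat (lookup M v))"
  unfolding pderiv_var_eq_lin_ext by (rule lin_ext_single) simp

lemma pderiv_var_sum: "pderiv_var v (sum f A) = (\<Sum>a\<in>A. pderiv_var v (f a))"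
  unfolding pderiv_var_eq_lin_ext by (rule lin_ext_sum) (auto simp: single_add distrib_right)

lemma pderiv_var_notin: "v \<notin> vars p \<Longrightarrow> pderiv_var v p = 0"
  unfolding pderiv_var_def vars_def by (intro sum.neutral) (auto simp: in_keys_iff)

lemma vars_pderiv_var: "vars (pderiv_var v p) \<subseteq> vars p"
proof
  fix x assume "x \<in> vars (pderiv_var v p)"
  then obtain M where M: "M \<in> keys p" "x \<in> vars (single (M - single v 1) (lookup p M * of_nat (lookup M v)))"
    unfolding pderiv_var_def using vars_sum by blast
  then have "x \<in> keys M"
    using vars_single by (fastforce simp: in_keys_iff lookup_minus)
  then show "x \<in> vars p"
    using M(1) unfolding vars_def by blast
qed

lemma pderiv_var_linear:
  fixes S T :: "'k::comm_ring_1 dpoly"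
  assumes "w \<notin> vars S" "w \<notin> vars T"
  shows "pderiv_var w (S * pvar w + T) = S"
proof -
  have "S * pvar w = (\<Sum>M\<in>keys S. single M (lookup S M)) * pvar w"
    by (subst poly_mapping_sum_single[of S]) simp
  then have "pderiv_var w (S * pvar w) = (\<Sum>M\<in>keys S. pderiv_var w (single (M + single w 1) (lookup S M)))"
    unfolding sum_distrib_right pvar_def by (simp add: mult_single pderiv_var_sum)
  also have "\<dots> = (\<Sum>M\<in>keys S. single M (lookup S M))"
  proof (intro sum.cong refl)
    fix M assume "M \<in> keys S"
    then have "lookup M w = 0"
      using assms(1) unfolding vars_def by (auto simp: in_keys_iff)
    moreover have "M + single w 1 - single w 1 = M"
      by (rule poly_mapping_eqI) (simp add: lookup_minus lookup_add)
    ultimately show "pderiv_var w (single (M + single w 1) (lookup S M)) = single M (lookup S M)"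
      by (simp add: pderiv_var_single lookup_add)
  qed
  also have "\<dots> = S"
    using poly_mapping_sum_single[of S] by simp
  finally show ?thesis
    using pderiv_var_notin[OF assms(2)] by (simp add: pderiv_var_add)
qed

lemma linear_poly:
  fixes p :: "'k::comm_ring_1 dpoly"
  assumes "vars p \<subseteq> {u}" "deg_in u p \<le> 1" "u \<in> vars p"
  shows "p = single (single u 1) (lookup p (single u 1)) + single 0 (lookup p 0)"
    "lookup p (single u 1) \<noteq> 0"
proof -
  have keys: "M = 0 \<or> M = single u 1" if M: "M \<in> keys p" for M
  proof -
    have ku: "keys M \<subseteq> {u}"
      using assms(1) M unfolding vars_def by blast
    have "lookup M u \<le> 1"
      using assms(2) M unfolding deg_in_le_iff by blast
    then consider "lookup M u = 0" | "lookup M u = 1"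
      by linarith
    then show ?thesis
    proof cases
      case 1
      have "M = 0"
        by (rule poly_mapping_eqI) (use ku 1 in \<open>auto simp: in_keys_iff\<close>)
      then show ?thesis ..
    next
      case 2
      have "M = single u 1"
        by (rule poly_mapping_eqI) (use ku 2 in \<open>auto simp: in_keys_iff lookup_single when_def\<close>)
      then show ?thesis ..
    qed
  qed
  show "p = single (single u 1) (lookup p (single u 1)) + single 0 (lookup p 0)"
  proof (rule poly_mapping_eqI)
    fix N
    consider "N = single u 1" | "N = 0" | "N \<notin> keys p" "N \<noteq> single u 1" "N \<noteq> 0"
      using keys by blast
    then show "lookup p N = lookup (single (single u 1) (lookup p (single u 1)) + single 0 (lookup p 0)) N"
      by cases (simp_all add: lookup_add lookup_single in_keys_iff)
  qed
  obtain M where M: "M \<in> keys p" "u \<in> keys M"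
    using assms(3) unfolding vars_def by blast
  then have "M = single u 1"
    using keys by fastforce
  then show "lookup p (single u 1) \<noteq> 0"
    using M(1) by (simp add: in_keys_iff)
qed

lemma linear_poly_initial_separant:
  fixes a b :: "'k::comm_ring_1"
  assumes p: "p = single (single u 1) a + single 0 b" and a: "a \<noteq> 0" and u: "leader rk p = u"
  shows "initial rk p = single 0 a" "separant rk p = single 0 a"
proof -
  let ?E = "single u (1::nat)"
  have keys: "keys p = {?E} \<union> (if b = 0 then {} else {0})"
    unfolding p using a by (auto simp: in_keys_iff lookup_add lookup_single when_def split: if_splits)
  have lookup: "lookup p ?E = a"
    unfolding p by (simp add: lookup_add lookup_single)
  have deg: "deg_in u p = 1"
    unfolding deg_in_def keys by auto
  have "{M \<in> keys p. lookup M u = 1} = {?E}"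
    unfolding keys by auto
  then show "initial rk p = single 0 a"
    unfolding initial_def lcoeff_in_def u deg using lookup by simp
  have "separant rk p = pderiv_var u p"
    unfolding separant_def u ..
  also have "\<dots> = single 0 a"
    unfolding p pderiv_var_add by (simp add: pderiv_var_single)
  finally show "separant rk p = single 0 a" .
qed

definition eval_monom :: "(dvar \<Rightarrow> 'k::comm_ring_1) \<Rightarrow> (dvar \<Rightarrow>\<^sub>0 nat) \<Rightarrow> 'k" where
  "eval_monom val M = (\<Prod>x\<in>keys M. val x ^ lookup M x)"

definition eval_poly :: "(dvar \<Rightarrow> 'k::comm_ring_1) \<Rightarrow> 'k dpoly \<Rightarrow> 'k" where
  "eval_poly val p = lin_ext (\<lambda>M c. c * eval_monom val M) p"

lemma eval_monom_superset:
  "finite A \<Longrightarrow> keys M \<subseteq> A \<Longrightarrow> eval_monom val M = (\<Prod>x\<in>A. val x ^ lookup M x)"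
  unfolding eval_monom_def by (intro prod.mono_neutral_left) (auto simp: in_keys_iff)

lemma eval_monom_zero [simp]: "eval_monom val 0 = 1"
  unfolding eval_monom_def by simp

lemma eval_monom_var [simp]: "eval_monom val (single v (Suc 0)) = val v"
  unfolding eval_monom_def by simp

lemma eval_monom_add: "eval_monom val (M + N) = eval_monom val M * eval_monom val N"
proof -
  let ?A = "keys M \<union> keys N"
  have "eval_monom val (M + N) = (\<Prod>x\<in>?A. val x ^ lookup (M + N) x)"
    by (rule eval_monom_superset) (auto simp: keys_add_nat)
  also have "\<dots> = (\<Prod>x\<in>?A. val x ^ lookup M x) * (\<Prod>x\<in>?A. val x ^ lookup N x)"
    by (simp add: lookup_add power_add prod.distrib)
  also have "\<dots> = eval_monom val M * eval_monom val N"
    by (simp add: eval_monom_superset[of ?A M] eval_monom_superset[of ?A N])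
  finally show ?thesis .
qed

lemma eval_poly_add: "eval_poly val (p + q) = eval_poly val p + eval_poly val q"
  unfolding eval_poly_def by (rule lin_ext_add) (auto simp: distrib_right)

lemma eval_poly_single: "eval_poly val (single M c) = c * eval_monom val M"
  unfolding eval_poly_def by (rule lin_ext_single) simp

lemma eval_poly_sum: "eval_poly val (sum f A) = (\<Sum>a\<in>A. eval_poly val (f a))"
  unfolding eval_poly_def by (rule lin_ext_sum) (auto simp: distrib_right)

lemma eval_poly_zero [simp]: "eval_poly val 0 = 0"
  by (simp add: eval_poly_def lin_ext_def)

lemma eval_poly_const [simp]: "eval_poly val (single 0 c) = c"
  by (simp add: eval_poly_single)

lemma eval_poly_mult: "eval_poly val (p * q) = eval_poly val p * eval_poly val q"
proof -
  have "p * q = (\<Sum>M\<in>keys p. single M (lookup p M)) * (\<Sum>N\<in>keys q. single N (lookup q N))"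
    by (subst poly_mapping_sum_single[of p], subst poly_mapping_sum_single[of q]) simp
  also have "\<dots> = (\<Sum>M\<in>keys p. \<Sum>N\<in>keys q. single (M + N) (lookup p M * lookup q N))"
    by (simp add: sum_product mult_single)
  finally have "eval_poly val (p * q)
      = (\<Sum>M\<in>keys p. \<Sum>N\<in>keys q. lookup p M * lookup q N * eval_monom val (M + N))"
    by (simp add: eval_poly_sum eval_poly_single)
  also have "\<dots> = (\<Sum>M\<in>keys p. lookup p M * eval_monom val M) * (\<Sum>N\<in>keys q. lookup q N * eval_monom val N)"
    by (simp add: sum_product eval_monom_add ac_simps)
  finally show ?thesis
    unfolding eval_poly_def lin_ext_def .
qed

lemma eval_poly_power: "eval_poly val (p ^ n) = eval_poly val p ^ n"
  by (induction n) (simp_all add: eval_poly_mult flip: single_one)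

lemma eval_poly_prod_list:
  "eval_poly val (prod_list (map f xs)) = prod_list (map (\<lambda>x. eval_poly val (f x)) xs)"
  by (induction xs) (simp_all add: eval_poly_mult flip: single_one)

locale derivation =
  fixes D :: "'k::comm_ring_1 \<Rightarrow> 'k"
  assumes D_add: "D (a + b) = D a + D b" and D_mult: "D (a * b) = D a * b + a * D b"
begin

lemma D_zero [simp]: "D 0 = 0"
  using D_add[of 0 0] by simp

lemma D_one [simp]: "D 1 = 0"
  using D_mult[of 1 1] by simp

lemma D_sum: "D (sum f A) = (\<Sum>a\<in>A. D (f a))"
  by (induction A rule: infinite_finite_induct) (auto simp: D_add)

lemma D_prod: "finite A \<Longrightarrow> D (prod f A) = (\<Sum>x\<in>A. D (f x) * (\<Prod>y\<in>A - {x}. f y))"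
proof (induction A rule: finite_induct)
  case (insert a F)
  have "(\<Prod>y\<in>insert a F - {x}. f y) = f a * (\<Prod>y\<in>F - {x}. f y)" if "x \<in> F" for x
  proof -
    have "insert a F - {x} = insert a (F - {x})"
      using that insert(2) by auto
    then show ?thesis
      using insert(1,2) by simp
  qed
  then have "D (f a) * prod f F + f a * (\<Sum>x\<in>F. D (f x) * (\<Prod>y\<in>F - {x}. f y))
      = D (f a) * (\<Prod>y\<in>insert a F - {a}. f y) + (\<Sum>x\<in>F. D (f x) * (\<Prod>y\<in>insert a F - {x}. f y))"
    using insert(2) by (simp add: sum_distrib_left ac_simps)
  then show ?case
    using insert by (simp add: D_mult)
qed simp

lemma D_power: "D (a ^ n) = of_nat n * a ^ (n - 1) * D a"
  by (induction n) (auto simp: D_mult algebra_simps power_eq_if)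

lemma D_eval_monom:
  assumes "finite A" "keys M \<subseteq> A"
  shows "D (eval_monom val M) = (\<Sum>x\<in>A. of_nat (lookup M x) * eval_monom val (M - single x 1) * D (val x))"
proof -
  have remove: "val x ^ (lookup M x - 1) * (\<Prod>y\<in>keys M - {x}. val y ^ lookup M y)
      = eval_monom val (M - single x 1)" if x: "x \<in> keys M" for x
  proof -
    have "eval_monom val (M - single x 1) = (\<Prod>y\<in>keys M. val y ^ lookup (M - single x 1) y)"
      by (rule eval_monom_superset) (auto simp: in_keys_iff lookup_minus)
    also have "\<dots> = val x ^ lookup (M - single x 1) x * (\<Prod>y\<in>keys M - {x}. val y ^ lookup (M - single x 1) y)"
      using x by (simp add: prod.remove)
    also have "(\<Prod>y\<in>keys M - {x}. val y ^ lookup (M - single x 1) y) = (\<Prod>y\<in>keys M - {x}. val y ^ lookup M y)"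
      by (intro prod.cong) (auto simp: lookup_minus lookup_single)
    finally show ?thesis
      by (simp add: lookup_minus)
  qed
  have "D (eval_monom val M) = (\<Sum>x\<in>keys M. D (val x ^ lookup M x) * (\<Prod>y\<in>keys M - {x}. val y ^ lookup M y))"
    unfolding eval_monom_def by (rule D_prod) simp
  also have "\<dots> = (\<Sum>x\<in>keys M. of_nat (lookup M x) * eval_monom val (M - single x 1) * D (val x))"
  proof (intro sum.cong refl)
    fix x assume x: "x \<in> keys M"
    have "D (val x ^ lookup M x) * (\<Prod>y\<in>keys M - {x}. val y ^ lookup M y)
       = of_nat (lookup M x) * (val x ^ (lookup M x - 1) * (\<Prod>y\<in>keys M - {x}. val y ^ lookup M y)) * D (val x)"
      by (simp only: D_power ac_simps)
    then show "D (val x ^ lookup M x) * (\<Prod>y\<in>keys M - {x}. val y ^ lookup M y)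
       = of_nat (lookup M x) * eval_monom val (M - single x 1) * D (val x)"
      by (simp only: remove[OF x])
  qed
  also have "\<dots> = (\<Sum>x\<in>A. of_nat (lookup M x) * eval_monom val (M - single x 1) * D (val x))"
    using assms by (intro sum.mono_neutral_left) (auto simp: in_keys_iff)
  finally show ?thesis .
qed

end

lemma derivation_diff_field: "diff_field d m \<Longrightarrow> i < m \<Longrightarrow> derivation (d i)"
  unfolding diff_field_def derivation_def by blast

abbreviation deriv_var :: "nat \<Rightarrow> dvar \<Rightarrow> dvar" where
  "deriv_var i x \<equiv> apply_op_var (single i 1) x"

definition coeff_deriv :: "(nat \<Rightarrow> 'k::comm_ring_1 \<Rightarrow> 'k) \<Rightarrow> nat \<Rightarrow> 'k dpoly \<Rightarrow> 'k dpoly" where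
  "coeff_deriv d i p = (\<Sum>M\<in>keys p. single M (d i (lookup p M)))"

lemma dderiv_eq:
  "dderiv d i p = coeff_deriv d i p + (\<Sum>v\<in>vars p. pderiv_var v p * pvar (deriv_var i v))"
  unfolding dderiv_def coeff_deriv_def ..

lemma vars_coeff_deriv: "vars (coeff_deriv d i p) \<subseteq> vars p"
proof
  fix x assume "x \<in> vars (coeff_deriv d i p)"
  then obtain M where "M \<in> keys p" "x \<in> vars (single M (d i (lookup p M)))"
    unfolding coeff_deriv_def using vars_sum by blast
  then show "x \<in> vars p"
    using vars_single unfolding vars_def by blast
qed

lemma vars_pderiv_var_sum:
  "vars (\<Sum>x\<in>V. pderiv_var x q * pvar (deriv_var i x)) \<subseteq> vars q \<union> deriv_var i ` V"
proof (rule order.trans[OF vars_sum], rule UN_least)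
  fix v assume "v \<in> V"
  then show "vars (pderiv_var v q * pvar (deriv_var i v)) \<subseteq> vars q \<union> deriv_var i ` V"
    using vars_mult[of "pderiv_var v q" "pvar (deriv_var i v)"] vars_pderiv_var[of v q] by auto
qed

lemma vars_dderiv: "vars (dderiv d i p) \<subseteq> vars p \<union> deriv_var i ` vars p"
  unfolding dderiv_eq using vars_add vars_coeff_deriv vars_pderiv_var_sum by blast

lemma dderiv_split:
  "dderiv d i q = pderiv_var w q * pvar (deriv_var i w)
     + (coeff_deriv d i q + (\<Sum>x\<in>vars q - {w}. pderiv_var x q * pvar (deriv_var i x)))"
proof (cases "w \<in> vars q")
  case True
  then show ?thesis
    unfolding dderiv_eq by (simp add: sum.remove[OF finite_vars True] ac_simps)
next
  case False
  then show ?thesis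
    unfolding dderiv_eq by (simp add: pderiv_var_notin)
qed

lemma vars_dderiv_split_rest:
  "vars (coeff_deriv d i q + (\<Sum>x\<in>vars q - {w}. pderiv_var x q * pvar (deriv_var i x)))
     \<subseteq> vars q \<union> deriv_var i ` (vars q - {w})"
  using vars_add vars_coeff_deriv vars_pderiv_var_sum by blast

lemma eval_poly_dderiv:
  assumes "derivation (d i)" and val: "\<And>x. val (deriv_var i x) = d i (val x)"
  shows "eval_poly val (dderiv d i p) = d i (eval_poly val p)"
proof -
  interpret derivation "d i" by fact
  have val': "val (apply_op_var (single i (Suc 0)) x) = d i (val x)" for x
    using val by simp
  have vp: "keys M \<subseteq> vars p" if "M \<in> keys p" for M
    using that unfolding vars_def by blast
  have "d i (eval_poly val p) = (\<Sum>M\<in>keys p. d i (lookup p M) * eval_monom val M + lookup p M * d i (eval_monom val M))"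
    unfolding eval_poly_def lin_ext_def by (simp add: D_sum D_mult)
  also have "\<dots> = (\<Sum>M\<in>keys p. d i (lookup p M) * eval_monom val M) + (\<Sum>M\<in>keys p. lookup p M * d i (eval_monom val M))"
    by (simp add: sum.distrib)
  also have "(\<Sum>M\<in>keys p. lookup p M * d i (eval_monom val M))
       = (\<Sum>M\<in>keys p. \<Sum>x\<in>vars p. lookup p M * of_nat (lookup M x) * eval_monom val (M - single x 1) * d i (val x))"
    by (intro sum.cong refl) (simp add: D_eval_monom[OF finite_vars vp] sum_distrib_left ac_simps)
  also have "\<dots> = (\<Sum>x\<in>vars p. \<Sum>M\<in>keys p. lookup p M * of_nat (lookup M x) * eval_monom val (M - single x 1) * d i (val x))"
    by (rule sum.swap)
  also have "\<dots> = (\<Sum>x\<in>vars p. eval_poly val (pderiv_var x p) * val (deriv_var i x))"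
    by (simp add: pderiv_var_def eval_poly_sum eval_poly_single val' sum_distrib_right)
  finally show ?thesis
    by (simp add: dderiv_eq coeff_deriv_def eval_poly_add eval_poly_sum eval_poly_mult eval_poly_single pvar_def)
qed

section \<open>Derivative operators and orders\<close>

lemma apply_op_var_add: "apply_op_var a (apply_op_var b u) = apply_op_var (a + b) u"
  unfolding apply_op_var_def by (simp add: add.assoc)

lemma apply_op_var_zero [simp]: "apply_op_var 0 u = u"
  unfolding apply_op_var_def by simp

lemma apply_op_var_eq_self_iff: "apply_op_var \<theta> u = u \<longleftrightarrow> \<theta> = 0"
  unfolding apply_op_var_def by (cases u) auto

lemma apply_op_var_inj: "apply_op_var \<theta> x = apply_op_var \<theta> y \<Longrightarrow> x = y"
  unfolding apply_op_var_def by (cases x, cases y) auto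

lemma not_proper_derivative_self: "\<not> is_proper_derivative x x"
  unfolding is_proper_derivative_def using apply_op_var_eq_self_iff by metis

lemma valid_op_add: "valid_op m (a + b) \<longleftrightarrow> valid_op m a \<and> valid_op m b"
  unfolding valid_op_def by (auto simp: keys_add_nat)

lemma valid_op_zero [simp]: "valid_op m 0"
  by (simp add: valid_op_def)

lemma valid_op_single [simp]: "i < m \<Longrightarrow> valid_op m (single i n)"
  unfolding valid_op_def by simp

lemma valid_var_apply_op_var:
  "valid_op m \<theta> \<Longrightarrow> valid_var m l u \<Longrightarrow> valid_var m l (apply_op_var \<theta> u)"
  unfolding valid_var_def apply_op_var_def by (simp add: valid_op_add)

lemma valid_var_deriv_var: "i < m \<Longrightarrow> valid_var m l u \<Longrightarrow> valid_var m l (deriv_var i u)"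
  by (intro valid_var_apply_op_var valid_op_single)

lemma is_proper_derivativeE:
  assumes "is_proper_derivative x u" "valid_var m l x"
  obtains \<theta> where "\<theta> \<noteq> 0" "valid_op m \<theta>" "x = apply_op_var \<theta> u"
  using assms unfolding is_proper_derivative_def valid_var_def apply_op_var_def
  by (auto simp: valid_op_add)

lemma op_ord_superset: "finite A \<Longrightarrow> keys \<theta> \<subseteq> A \<Longrightarrow> op_ord \<theta> = (\<Sum>i\<in>A. lookup \<theta> i)"
  unfolding op_ord_def by (intro sum.mono_neutral_left) (auto simp: in_keys_iff)

lemma op_ord_add: "op_ord (a + b) = op_ord a + op_ord b"
proof -
  let ?A = "keys a \<union> keys b"
  have "op_ord (a + b) = (\<Sum>i\<in>?A. lookup (a + b) i)"
    by (rule op_ord_superset) (auto simp: keys_add_nat)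
  also have "\<dots> = (\<Sum>i\<in>?A. lookup a i) + (\<Sum>i\<in>?A. lookup b i)"
    by (simp add: lookup_add sum.distrib)
  also have "\<dots> = op_ord a + op_ord b"
    by (simp add: op_ord_superset[of ?A a] op_ord_superset[of ?A b])
  finally show ?thesis .
qed

lemma lookup_le_op_ord: "lookup \<theta> i \<le> op_ord \<theta>"
  unfolding op_ord_def by (cases "i \<in> keys \<theta>") (auto simp: in_keys_iff intro: member_le_sum)

lemma finite_bounded_ops: "finite {\<theta>. valid_op m \<theta> \<and> op_ord \<theta> \<le> h}"
proof -
  let ?A = "{\<theta>. valid_op m \<theta> \<and> op_ord \<theta> \<le> h}"
  let ?f = "\<lambda>\<theta>. map (lookup \<theta>) [0..<m]"
  have "?f ` ?A \<subseteq> {xs. set xs \<subseteq> {..h} \<and> length xs = m}"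
    using lookup_le_op_ord order.trans by fastforce
  then have fin: "finite (?f ` ?A)"
    using finite_lists_length_eq[of "{..h}" m] finite_subset by blast
  have "inj_on ?f ?A"
  proof
    fix a b assume ab: "a \<in> ?A" "b \<in> ?A" "?f a = ?f b"
    show "a = b"
    proof (rule poly_mapping_eqI)
      fix i
      show "lookup a i = lookup b i"
      proof (cases "i < m")
        case True
        then show ?thesis
          using ab(3) by (metis map_eq_conv atLeastLessThan_iff set_upt zero_le)
      next
        case False
        then have "i \<notin> keys a" "i \<notin> keys b"
          using ab(1,2) unfolding valid_op_def by auto
        then show ?thesis
          by (simp add: in_keys_iff)
      qed
    qed
  qed
  then show ?thesis
    using finite_imageD[OF fin] by blast
qed

lemma finite_bounded_vars: "finite {x. valid_var m l x \<and> var_ord x \<le> h}"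
proof -
  have "{x. valid_var m l x \<and> var_ord x \<le> h} \<subseteq> {\<theta>. valid_op m \<theta> \<and> op_ord \<theta> \<le> h} \<times> {..<l}"
    unfolding valid_var_def var_ord_def by auto
  then show ?thesis
    using finite_bounded_ops finite_subset by blast
qed

lemma apply_op_zero [simp]: "apply_op d m 0 p = p"
proof -
  have "foldr (\<lambda>i. dderiv d i ^^ lookup 0 i) xs p = p" for xs
    by (induction xs) auto
  then show ?thesis
    unfolding apply_op_def by simp
qed

lemma diff_ideal_apply_op:
  assumes "is_diff_ideal d m l J" "c \<in> J"
  shows "apply_op d m \<theta> c \<in> J"
proof -
  have pw: "(dderiv d i ^^ n) q \<in> J" if "q \<in> J" "i < m" for i n q
    using that assms(1) unfolding is_diff_ideal_def by (induction n) auto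
  have "set xs \<subseteq> {..<m} \<Longrightarrow> foldr (\<lambda>i q. (dderiv d i ^^ lookup \<theta> i) q) xs c \<in> J" for xs
    by (induction xs) (auto intro: pw assms(2))
  moreover have "set [0..<m] \<subseteq> {..<m}"
    by auto
  ultimately show ?thesis
    unfolding apply_op_def by blast
qed

definition apply_op_const :: "(nat \<Rightarrow> 'k \<Rightarrow> 'k) \<Rightarrow> nat \<Rightarrow> dop \<Rightarrow> 'k \<Rightarrow> 'k" where
  "apply_op_const d m \<theta> c = foldr (\<lambda>i. d i ^^ lookup \<theta> i) [0..<m] c"

lemma apply_op_const_zero [simp]: "apply_op_const d m 0 c = c"
proof -
  have "foldr (\<lambda>i. d i ^^ lookup 0 i) xs c = c" for xs
    by (induction xs) auto
  then show ?thesis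
    unfolding apply_op_const_def by simp
qed

lemma apply_op_const_deriv:
  assumes comm: "\<And>a i j. i < m \<Longrightarrow> j < m \<Longrightarrow> d i (d j a) = d j (d i a)" and i: "i < m"
  shows "apply_op_const d m (single i 1 + \<theta>) c = d i (apply_op_const d m \<theta> c)"
proof -
  have comm_pow: "(d j ^^ n) (d i a) = d i ((d j ^^ n) a)" if "j < m" for j n a
    using that by (induction n) (auto simp: comm[OF that i])
  have "foldr (\<lambda>j. d j ^^ lookup (single i 1 + \<theta>) j) xs c = d i (foldr (\<lambda>j. d j ^^ lookup \<theta> j) xs c)"
    if "distinct xs" "i \<in> set xs" "set xs \<subseteq> {..<m}" for xs
    using that
  proof (induction xs)
    case (Cons j js)
    show ?case
    proof (cases "j = i")
      case True
      then have "foldr (\<lambda>j. d j ^^ lookup (single i 1 + \<theta>) j) js c = foldr (\<lambda>j. d j ^^ lookup \<theta> j) js c"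
        using Cons.prems by (intro foldr_cong) (auto simp: lookup_add lookup_single when_def)
      then show ?thesis
        using True by (simp add: lookup_add)
    next
      case False
      then show ?thesis
        using Cons comm_pow[of j] by (simp add: lookup_add lookup_single)
    qed
  qed simp
  moreover have "set [0..<m] \<subseteq> {..<m}"
    by auto
  ultimately show ?thesis
    unfolding apply_op_const_def using i by simp
qed

section \<open>Ideals and rings of polynomials in a set of derivatives\<close>

lemma is_ideal_in_zero: "is_ideal_in S K \<Longrightarrow> 0 \<in> K"
  unfolding is_ideal_in_def by blast

lemma is_ideal_in_add: "is_ideal_in S K \<Longrightarrow> a \<in> K \<Longrightarrow> b \<in> K \<Longrightarrow> a + b \<in> K"
  unfolding is_ideal_in_def by blast

lemma is_ideal_in_mult: "is_ideal_in S K \<Longrightarrow> a \<in> K \<Longrightarrow> r \<in> S \<Longrightarrow> r * a \<in> K"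
  unfolding is_ideal_in_def by blast

lemma is_ideal_in_diff:
  assumes "is_ideal_in S K" "- 1 \<in> S" "a \<in> K" "b \<in> K"
  shows "a - b \<in> K"
proof -
  have "(- 1) * b \<in> K"
    using assms is_ideal_in_mult by blast
  then show ?thesis
    using assms(1,3) is_ideal_in_add[of S K a "(- 1) * b"] by simp
qed

lemma ideal_gen_is_ideal:
  assumes "0 \<in> S" "\<And>a b. a \<in> S \<Longrightarrow> b \<in> S \<Longrightarrow> a + b \<in> S" "\<And>a b. a \<in> S \<Longrightarrow> b \<in> S \<Longrightarrow> a * b \<in> S"
    and "G \<subseteq> S"
  shows "is_ideal_in S (ideal_gen S G)"
proof -
  let ?F = "{J. G \<subseteq> J \<and> is_ideal_in S J}"
  have "is_ideal_in S S"
    unfolding is_ideal_in_def using assms by blast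
  then have "\<Inter> ?F \<subseteq> S"
    using assms(4) by blast
  moreover have "0 \<in> \<Inter> ?F" "\<forall>a\<in>\<Inter> ?F. \<forall>b\<in>\<Inter> ?F. a + b \<in> \<Inter> ?F"
    "\<forall>a\<in>\<Inter> ?F. \<forall>r\<in>S. r * a \<in> \<Inter> ?F"
    unfolding is_ideal_in_def by blast+
  ultimately show ?thesis
    unfolding is_ideal_in_def ideal_gen_def by blast
qed

lemma ideal_gen_superset: "G \<subseteq> ideal_gen S G"
  unfolding ideal_gen_def by blast

lemma ideal_gen_least: "is_ideal_in S K \<Longrightarrow> G \<subseteq> K \<Longrightarrow> ideal_gen S G \<subseteq> K"
  unfolding ideal_gen_def by blast

definition polys_in :: "dvar set \<Rightarrow> 'k::comm_ring_1 dpoly set" where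
  "polys_in V = {p. vars p \<subseteq> V}"

lemma dring_eq_polys_in: "dring m l = polys_in {x. valid_var m l x}"
  unfolding polys_in_def dring_def by auto

lemma dring_h_eq_polys_in: "dring_h m l h = polys_in {x. valid_var m l x \<and> var_ord x \<le> h}"
  unfolding polys_in_def dring_h_def dring_def by auto

lemma dring_h_subset_dring: "dring_h m l h \<subseteq> dring m l"
  unfolding dring_h_def by blast

lemma polys_in_zero [simp]: "0 \<in> polys_in V"
  and polys_in_one [simp]: "1 \<in> polys_in V"
  and polys_in_const [simp]: "single 0 c \<in> polys_in V"
  by (auto simp: polys_in_def vars_def)

lemma polys_in_add: "p \<in> polys_in V \<Longrightarrow> q \<in> polys_in V \<Longrightarrow> p + q \<in> polys_in V"
  and polys_in_mult: "p \<in> polys_in V \<Longrightarrow> q \<in> polys_in V \<Longrightarrow> p * q \<in> polys_in V"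
  and polys_in_power: "p \<in> polys_in V \<Longrightarrow> p ^ n \<in> polys_in V"
  unfolding polys_in_def using vars_add vars_mult vars_power by blast+

lemma polys_in_uminus: "p \<in> polys_in V \<Longrightarrow> - p \<in> polys_in V"
  unfolding polys_in_def by simp

lemma polys_in_prod_list: "(\<And>a. a \<in> set xs \<Longrightarrow> f a \<in> polys_in V) \<Longrightarrow> prod_list (map f xs) \<in> polys_in V"
  unfolding polys_in_def using vars_prod_list by blast

lemma polys_in_vars_subset: "vars p \<subseteq> vars q \<Longrightarrow> q \<in> polys_in V \<Longrightarrow> p \<in> polys_in V"
  unfolding polys_in_def by blast

lemma ideal_gen_polys_in_is_ideal: "G \<subseteq> polys_in V \<Longrightarrow> is_ideal_in (polys_in V) (ideal_gen (polys_in V) G)"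
  by (rule ideal_gen_is_ideal) (auto intro: polys_in_add polys_in_mult)

lemma is_ideal_in_polys_in_diff:
  "is_ideal_in (polys_in V) K \<Longrightarrow> a \<in> K \<Longrightarrow> b \<in> K \<Longrightarrow> a - b \<in> K"
  by (rule is_ideal_in_diff) (auto intro: polys_in_uminus)

lemma saturation_is_ideal:
  fixes K :: "'k::comm_ring_1 dpoly set"
  assumes K: "is_ideal_in (polys_in V) K" and H: "H \<in> polys_in V"
  shows "is_ideal_in (polys_in V) (saturation (polys_in V) K H)"
  unfolding is_ideal_in_def saturation_def
proof (intro conjI ballI)
  show "0 \<in> {a \<in> polys_in V. \<exists>n. H ^ n * a \<in> K}"
    using is_ideal_in_zero[OF K] by auto
  fix a assume "a \<in> {a \<in> polys_in V. \<exists>n. H ^ n * a \<in> K}"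
  then obtain n where a: "a \<in> polys_in V" "H ^ n * a \<in> K"
    by blast
  have Hk: "H ^ k \<in> polys_in V" for k
    using H by (rule polys_in_power)
  {
    fix b assume "b \<in> {a \<in> polys_in V. \<exists>n. H ^ n * a \<in> K}"
    then obtain k where b: "b \<in> polys_in V" "H ^ k * b \<in> K"
      by blast
    have "H ^ (n + k) * (a + b) = H ^ k * (H ^ n * a) + H ^ n * (H ^ k * b)"
      by (simp add: algebra_simps power_add)
    also have "\<dots> \<in> K"
      using is_ideal_in_add[OF K] is_ideal_in_mult[OF K] a(2) b(2) Hk by blast
    finally show "a + b \<in> {a \<in> polys_in V. \<exists>n. H ^ n * a \<in> K}"
      using a b polys_in_add by blast
  }
  {
    fix r :: "'k dpoly" assume r: "r \<in> polys_in V"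
    have "H ^ n * (r * a) = r * (H ^ n * a)"
      by (simp add: ac_simps)
    also have "\<dots> \<in> K"
      using is_ideal_in_mult[OF K a(2) r] .
    finally show "r * a \<in> {a \<in> polys_in V. \<exists>n. H ^ n * a \<in> K}"
      using a r polys_in_mult by blast
  }
qed auto

text \<open>The kernel of an evaluation compatible with the derivations is a differential ideal.\<close>

lemma diff_ideal_gen_eval_zero:
  assumes df: "diff_field d m" and val: "\<And>i x. i < m \<Longrightarrow> val (deriv_var i x) = d i (val x)"
    and F: "\<forall>c\<in>F. c \<in> dring m l \<and> eval_poly val c = 0" and p: "p \<in> diff_ideal_gen d m l F"
  shows "eval_poly val p = 0"
proof -
  define P where "P = {p \<in> dring m l. eval_poly val p = 0}"
  have R: "dring m l = polys_in {x. valid_var m l x}"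
    by (rule dring_eq_polys_in)
  have "is_diff_ideal d m l P"
    unfolding is_diff_ideal_def is_ideal_in_def
  proof (intro conjI allI impI ballI)
    show "P \<subseteq> dring m l" "0 \<in> P"
      unfolding P_def R by auto
    fix a assume a: "a \<in> P"
    show "a + b \<in> P" if "b \<in> P" for b
      using a that unfolding P_def R by (auto intro: polys_in_add simp: eval_poly_add)
    show "r * a \<in> P" if "r \<in> dring m l" for r
      using a that unfolding P_def R by (auto intro: polys_in_mult simp: eval_poly_mult)
    fix i assume i: "i < m"
    have "vars (dderiv d i a) \<subseteq> {x. valid_var m l x}"
      using vars_dderiv[of d i a] a valid_var_deriv_var[OF i] unfolding P_def dring_def by blast
    moreover have "eval_poly val (dderiv d i a) = 0"
      using eval_poly_dderiv[where d = d and i = i and val = val and p = a, OF derivation_diff_field[OF df i] val[OF i]] a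
        derivation.D_zero[OF derivation_diff_field[OF df i]]
      unfolding P_def by simp
    ultimately show "dderiv d i a \<in> P"
      unfolding P_def R polys_in_def by blast
  qed
  moreover have "F \<subseteq> P"
    using F unfolding P_def by blast
  ultimately show ?thesis
    using p unfolding diff_ideal_gen_def P_def by blast
qed

section \<open>Rankings\<close>

locale ranking =
  fixes m l :: nat and rk :: "dvar \<Rightarrow> dvar \<Rightarrow> bool"
  assumes is_ranking: "is_ranking m l rk"
begin

abbreviation valid :: "dvar \<Rightarrow> bool" where
  "valid \<equiv> valid_var m l"

lemma rk_refl: "valid u \<Longrightarrow> rk u u"
  using is_ranking unfolding is_ranking_def by blast

lemma rk_antisym: "valid u \<Longrightarrow> valid v \<Longrightarrow> rk u v \<Longrightarrow> rk v u \<Longrightarrow> u = v"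
  using is_ranking unfolding is_ranking_def by blast

lemma rk_trans: "valid u \<Longrightarrow> valid v \<Longrightarrow> valid w \<Longrightarrow> rk u v \<Longrightarrow> rk v w \<Longrightarrow> rk u w"
  using is_ranking unfolding is_ranking_def by blast

lemma rk_total: "valid u \<Longrightarrow> valid v \<Longrightarrow> rk u v \<or> rk v u"
  using is_ranking unfolding is_ranking_def by blast

lemma rk_apply_op_var: "valid_op m \<theta> \<Longrightarrow> valid u \<Longrightarrow> rk u (apply_op_var \<theta> u)"
  using is_ranking unfolding is_ranking_def by blast

lemma rk_less_trans: "valid u \<Longrightarrow> valid v \<Longrightarrow> valid w \<Longrightarrow> rk_less rk u v \<Longrightarrow> rk_less rk v w \<Longrightarrow> rk_less rk u w"
  and rk_le_less_trans: "valid u \<Longrightarrow> valid v \<Longrightarrow> valid w \<Longrightarrow> rk u v \<Longrightarrow> rk_less rk v w \<Longrightarrow> rk_less rk u w"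
  unfolding rk_less_def using rk_trans rk_antisym by blast+

lemma rk_less_iff_not_rk: "valid u \<Longrightarrow> valid v \<Longrightarrow> rk_less rk u v \<longleftrightarrow> \<not> rk v u"
  unfolding rk_less_def using rk_antisym rk_total rk_refl by blast

lemma rk_less_apply_op_var: "valid_op m \<theta> \<Longrightarrow> \<theta> \<noteq> 0 \<Longrightarrow> valid u \<Longrightarrow> rk_less rk u (apply_op_var \<theta> u)"
  unfolding rk_less_def using rk_apply_op_var apply_op_var_eq_self_iff by metis

lemma rk_less_apply_op_var_mono:
  assumes "valid_op m \<theta>" "valid u" "valid v" "rk_less rk v u"
  shows "rk_less rk (apply_op_var \<theta> v) (apply_op_var \<theta> u)"
  using is_ranking assms apply_op_var_inj unfolding is_ranking_def rk_less_def by metis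

lemma rk_less_deriv_var: "i < m \<Longrightarrow> valid u \<Longrightarrow> rk_less rk u (deriv_var i u)"
  by (rule rk_less_apply_op_var) auto

lemma rk_less_proper_derivative: "is_proper_derivative x u \<Longrightarrow> valid x \<Longrightarrow> valid u \<Longrightarrow> rk_less rk u x"
  by (metis is_proper_derivativeE rk_less_apply_op_var)

lemma orderly_var_ord_le:
  "is_orderly m l rk \<Longrightarrow> valid x \<Longrightarrow> valid w \<Longrightarrow> rk x w \<Longrightarrow> var_ord x \<le> var_ord w"
  unfolding is_orderly_def rk_less_def using rk_antisym by (meson not_le)

lemma exists_rk_greatest:
  assumes "finite S" "S \<noteq> {}" "\<forall>x\<in>S. valid x"
  shows "\<exists>x\<in>S. \<forall>y\<in>S. rk y x"
  using assms
proof (induction S rule: finite_ne_induct)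
  case (singleton x)
  then show ?case
    using rk_refl by auto
next
  case (insert x F)
  then obtain y where y: "y \<in> F" "\<forall>z\<in>F. rk z y"
    by auto
  show ?case
  proof (cases "rk x y")
    case True
    then show ?thesis
      using y insert.prems by auto
  next
    case False
    then have "rk y x"
      using rk_total y(1) insert.prems by blast
    then have "\<forall>z\<in>insert x F. rk z x"
      using rk_trans[of _ y x] rk_refl y insert.prems by auto
    then show ?thesis
      by blast
  qed
qed

lemma vars_valid: "p \<in> dring m l \<Longrightarrow> x \<in> vars p \<Longrightarrow> valid x"
  unfolding dring_def by blast

lemma leader_spec:
  assumes "p \<in> dring m l" "vars p \<noteq> {}"
  shows "leader rk p \<in> vars p" "\<forall>v\<in>vars p. rk v (leader rk p)" "valid (leader rk p)"
proof -
  obtain x where x: "x \<in> vars p" "\<forall>y\<in>vars p. rk y x"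
    using exists_rk_greatest[OF finite_vars assms(2)] vars_valid[OF assms(1)] by blast
  have "leader rk p = x"
    unfolding leader_def
  proof (rule the_equality)
    fix u assume "u \<in> vars p \<and> (\<forall>v\<in>vars p. rk v u)"
    then show "u = x"
      using x rk_antisym vars_valid[OF assms(1)] by blast
  qed (use x in blast)
  then show "leader rk p \<in> vars p" "\<forall>v\<in>vars p. rk v (leader rk p)" "valid (leader rk p)"
    using x vars_valid[OF assms(1)] by auto
qed

lemma prank_less_imp_reduced:
  fixes c f :: "'k::comm_ring_1 dpoly"
  assumes c: "c \<in> dring m l" "vars c \<noteq> {}" and f: "f \<in> dring m l" "vars f \<noteq> {}"
    and less: "prank_less rk c f"
  shows "reduced_wrt rk c f"
proof -
  note lc = leader_spec[OF c] and lf = leader_spec[OF f]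
  have cf: "rk (leader rk c) (leader rk f)"
    using less rk_refl[OF lf(3)] unfolding prank_less_def rk_less_def by auto
  have "\<not> is_proper_derivative v (leader rk f)" if v: "v \<in> vars c" for v
  proof
    assume "is_proper_derivative v (leader rk f)"
    then have "rk_less rk (leader rk f) v"
      using rk_less_proper_derivative vars_valid[OF c(1) v] lf(3) by blast
    moreover have "rk v (leader rk f)"
      using rk_trans[OF vars_valid[OF c(1) v] lc(3) lf(3)] lc(2) v cf by blast
    ultimately show False
      using rk_less_iff_not_rk[OF lf(3) vars_valid[OF c(1) v]] by blast
  qed
  moreover have "deg_in (leader rk f) c < deg_in (leader rk f) f"
  proof (cases "leader rk c = leader rk f")
    case True
    then show ?thesis
      using less unfolding prank_less_def rk_less_def by auto
  next
    case False
    then have "rk_less rk (leader rk c) (leader rk f)"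
      using less unfolding prank_less_def by auto
    then have "leader rk f \<notin> vars c"
      using lc(2) rk_less_iff_not_rk[OF lc(3) lf(3)] by blast
    then show ?thesis
      using deg_in_notin deg_in_pos[OF lf(1)] by metis
  qed
  ultimately show ?thesis
    unfolding reduced_wrt_def by blast
qed

lemma reduced_imp_prank_less:
  fixes c f :: "'k::comm_ring_1 dpoly"
  assumes c: "c \<in> dring m l" "vars c \<noteq> {}" and f: "f \<in> dring m l" "vars f \<noteq> {}"
    and not_less: "\<not> prank_less rk c f" and red: "reduced_wrt rk f c"
  shows "prank_less rk f c"
proof (cases "leader rk f = leader rk c")
  case True
  then show ?thesis
    using red unfolding reduced_wrt_def prank_less_def by simp
next
  case False
  have "rk (leader rk f) (leader rk c)"
    using not_less rk_less_iff_not_rk[OF leader_spec(3)[OF c] leader_spec(3)[OF f]] unfolding prank_less_def by blast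
  then show ?thesis
    using False unfolding prank_less_def rk_less_def by blast
qed

text \<open>For \<open>\<theta> \<noteq> 0\<close>, \<open>\<theta> p = S\<^sub>p \<theta>u\<^sub>p + T\<close> with every derivative in \<open>T\<close> ranking below \<open>\<theta>u\<^sub>p\<close>.
  \<open>derivative_shape\<close> is the invariant maintained while \<open>\<theta>\<close> is built up one \<open>\<delta>\<^sub>i\<close> at a time.\<close>

definition lower_than :: "'k::zero dpoly \<Rightarrow> dvar \<Rightarrow> bool" where
  "lower_than T w \<longleftrightarrow> (\<forall>x\<in>vars T. valid x \<and> rk_less rk x w)"

definition derivative_shape :: "'k::comm_ring_1 dpoly \<Rightarrow> 'k dpoly \<Rightarrow> dop \<Rightarrow> bool" where
  "derivative_shape p q \<theta> \<longleftrightarrow> valid_op m \<theta> \<and> (\<forall>x\<in>vars q. valid x) \<and>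
     (if \<theta> = 0 then q = p
      else \<exists>T. q = separant rk p * pvar (apply_op_var \<theta> (leader rk p)) + T
               \<and> lower_than T (apply_op_var \<theta> (leader rk p)))"

lemma dderiv_lower:
  fixes q :: "'k::comm_ring_1 dpoly"
  assumes i: "i < m" and w: "valid w" and q: "\<forall>x\<in>vars q. valid x \<and> rk x w"
  shows "\<exists>T. dderiv d i q = pderiv_var w q * pvar (deriv_var i w) + T \<and> lower_than T (deriv_var i w)"
proof -
  define T where "T = coeff_deriv d i q + (\<Sum>x\<in>vars q - {w}. pderiv_var x q * pvar (deriv_var i x))"
  have "dderiv d i q = pderiv_var w q * pvar (deriv_var i w) + T"
    unfolding T_def by (rule dderiv_split)
  moreover have "valid x \<and> rk_less rk x (deriv_var i w)" if "x \<in> vars T" for x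
  proof -
    have "x \<in> vars q \<or> x \<in> deriv_var i ` (vars q - {w})"
      using that vars_dderiv_split_rest unfolding T_def by blast
    then show ?thesis
    proof
      assume "x \<in> vars q"
      then show ?thesis
        using q rk_le_less_trans[OF _ w valid_var_deriv_var[OF i w] _ rk_less_deriv_var[OF i w]] by blast
    next
      assume "x \<in> deriv_var i ` (vars q - {w})"
      then obtain y where y: "y \<in> vars q" "y \<noteq> w" "x = deriv_var i y"
        by blast
      then have "rk_less rk y w"
        using q unfolding rk_less_def by blast
      then show ?thesis
        using rk_less_apply_op_var_mono[OF valid_op_single[OF i] w] q y valid_var_deriv_var[OF i] by blast
    qed
  qed
  ultimately show ?thesis
    unfolding lower_than_def by blast
qed

lemma pderiv_var_leading:
  fixes S T :: "'k::comm_ring_1 dpoly"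
  assumes w: "valid w" and S: "\<forall>x\<in>vars S. rk_less rk x w" and T: "lower_than T w"
  shows "pderiv_var w (S * pvar w + T) = S" "\<forall>x\<in>vars (S * pvar w + T). rk x w"
proof -
  have "w \<notin> vars S" "w \<notin> vars T"
    using S T unfolding lower_than_def rk_less_def by blast+
  then show "pderiv_var w (S * pvar w + T) = S"
    by (rule pderiv_var_linear)
  show "\<forall>x\<in>vars (S * pvar w + T). rk x w"
  proof
    fix x assume "x \<in> vars (S * pvar w + T)"
    then have "x \<in> vars S \<or> x = w \<or> x \<in> vars T"
      using vars_add[of "S * pvar w" T] vars_mult[of S "pvar w"] by auto
    then show "rk x w"
      using S T rk_refl[OF w] unfolding lower_than_def rk_less_def by blast
  qed
qed

lemma derivative_shape_pderiv_var:
  fixes p :: "'k::comm_ring_1 dpoly"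
  assumes p: "p \<in> dring m l" "vars p \<noteq> {}" and shape: "derivative_shape p q \<theta>"
  defines "w \<equiv> apply_op_var \<theta> (leader rk p)"
  shows "pderiv_var w q = separant rk p" "\<forall>x\<in>vars q. valid x \<and> rk x w"
proof -
  note u = leader_spec[OF p]
  have th: "valid_op m \<theta>" and vq: "\<forall>x\<in>vars q. valid x"
    using shape unfolding derivative_shape_def by auto
  have vw: "valid w"
    unfolding w_def using valid_var_apply_op_var th u(3) by blast
  have "pderiv_var w q = separant rk p \<and> (\<forall>x\<in>vars q. rk x w)"
  proof (cases "\<theta> = 0")
    case True
    then show ?thesis
      using shape u(2) unfolding derivative_shape_def w_def separant_def by simp
  next
    case False
    then obtain T where T: "q = separant rk p * pvar w + T" "lower_than T w"
      using shape unfolding derivative_shape_def w_def by auto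
    have "\<forall>x\<in>vars (separant rk p). rk_less rk x w"
    proof
      fix x assume "x \<in> vars (separant rk p)"
      then have "x \<in> vars p"
        using vars_pderiv_var unfolding separant_def by blast
      then show "rk_less rk x w"
        using u rk_le_less_trans[OF vars_valid[OF p(1)] u(3) vw] rk_less_apply_op_var[OF th False u(3)]
        unfolding w_def by blast
    qed
    then show ?thesis
      using pderiv_var_leading[OF vw _ T(2)] T(1) by blast
  qed
  then show "pderiv_var w q = separant rk p" "\<forall>x\<in>vars q. valid x \<and> rk x w"
    using vq by auto
qed

lemma derivative_shape_dderiv:
  fixes p :: "'k::comm_ring_1 dpoly"
  assumes p: "p \<in> dring m l" "vars p \<noteq> {}" and shape: "derivative_shape p q \<theta>" and i: "i < m"
  shows "derivative_shape p (dderiv d i q) (single i 1 + \<theta>)"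
proof -
  define w where "w = apply_op_var \<theta> (leader rk p)"
  have th: "valid_op m \<theta>"
    using shape unfolding derivative_shape_def by auto
  have vw: "valid w"
    unfolding w_def using valid_var_apply_op_var th leader_spec(3)[OF p] by blast
  note q = derivative_shape_pderiv_var[OF p shape, folded w_def]
  obtain T where T: "dderiv d i q = separant rk p * pvar (deriv_var i w) + T" "lower_than T (deriv_var i w)"
    using dderiv_lower[OF i vw q(2)] q(1) by auto
  have "lookup (single i 1 + \<theta>) i \<noteq> 0"
    by (simp add: lookup_add)
  then have "single i 1 + \<theta> \<noteq> 0"
    by auto
  moreover have "deriv_var i w = apply_op_var (single i 1 + \<theta>) (leader rk p)"
    unfolding w_def apply_op_var_add ..
  moreover have "\<forall>x\<in>vars (dderiv d i q). valid x"
    using vars_dderiv[of d i q] q(2) valid_var_deriv_var[OF i] by blast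
  moreover have "valid_op m (single i 1 + \<theta>)"
    using th i by (simp add: valid_op_add)
  ultimately show ?thesis
    using T unfolding derivative_shape_def by simp
qed

lemma derivative_shape_apply_op:
  fixes p :: "'k::comm_ring_1 dpoly"
  assumes p: "p \<in> dring m l" "vars p \<noteq> {}" and th: "valid_op m \<theta>"
  shows "derivative_shape p (apply_op d m \<theta> p) \<theta>"
proof -
  have power: "derivative_shape p ((dderiv d i ^^ n) q) (single i n + \<theta>')"
    if "derivative_shape p q \<theta>'" "i < m" for q \<theta>' i n
  proof (induction n)
    case (Suc n)
    have "single i (Suc n) + \<theta>' = single i 1 + (single i n + \<theta>')"
      by (simp add: single_add[symmetric] add.assoc[symmetric])
    then show ?case
      using derivative_shape_dderiv[OF p Suc that(2)] by simp
  qed (use that in simp)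
  have foldr: "derivative_shape p (foldr (\<lambda>i q. (dderiv d i ^^ lookup \<theta> i) q) xs p)
      (\<Sum>i\<leftarrow>xs. single i (lookup \<theta> i))" if "set xs \<subseteq> {..<m}" for xs
    using that
  proof (induction xs)
    case Nil
    then show ?case
      using vars_valid[OF p(1)] unfolding derivative_shape_def by simp
  next
    case (Cons i xs)
    then show ?case
      using power[of _ _ i "lookup \<theta> i"] by simp
  qed
  have "(\<Sum>i\<leftarrow>[0..<m]. single i (lookup \<theta> i)) = \<theta>"
  proof (rule poly_mapping_eqI)
    fix k
    have "lookup (\<Sum>i\<leftarrow>[0..<m]. single i (lookup \<theta> i)) k = (\<Sum>i\<in>{0..<m}. lookup \<theta> i when i = k)"
      by (simp add: sum_list_distinct_conv_sum_set lookup_sum lookup_single)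
    also have "\<dots> = lookup \<theta> k"
      using th unfolding valid_op_def by (auto simp: in_keys_iff when_def)
    finally show "lookup (\<Sum>i\<leftarrow>[0..<m]. single i (lookup \<theta> i)) k = lookup \<theta> k" .
  qed
  with foldr[of "[0..<m]"] show ?thesis
    unfolding apply_op_def by (auto simp: atLeast0LessThan)
qed

lemma apply_op_shape:
  fixes p :: "'k::comm_ring_1 dpoly"
  assumes "p \<in> dring m l" "vars p \<noteq> {}" "valid_op m \<theta>" "\<theta> \<noteq> 0"
  obtains T where "apply_op d m \<theta> p = separant rk p * pvar (apply_op_var \<theta> (leader rk p)) + T"
    "lower_than T (apply_op_var \<theta> (leader rk p))"
  using derivative_shape_apply_op[OF assms(1-3)] assms(4) unfolding derivative_shape_def by auto

lemma vars_apply_op: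
  fixes p :: "'k::comm_ring_1 dpoly"
  assumes "p \<in> dring m l" "vars p \<noteq> {}" "valid_op m \<theta>"
  shows "\<forall>x\<in>vars (apply_op d m \<theta> p). valid x \<and> rk x (apply_op_var \<theta> (leader rk p))"
  using derivative_shape_pderiv_var(2)[OF assms(1,2) derivative_shape_apply_op[OF assms]] .

lemma autoreduced_take_append:
  fixes A :: "'k::comm_ring_1 dpoly list"
  assumes A: "autoreduced m l rk A" and i: "i \<le> length A"
    and f: "f \<in> dring m l" "vars f \<noteq> {}" and below: "\<And>j. j < i \<Longrightarrow> prank_less rk (A ! j) f"
    and red: "\<forall>k<length A. reduced_wrt rk f (A ! k)"
  shows "autoreduced m l rk (take i A @ [f])"
proof -
  define B where "B = take i A @ [f]"
  have lB: "length B = Suc i" and Bj: "\<And>j. j < i \<Longrightarrow> B ! j = A ! j" and Bi: "B ! i = f"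
    unfolding B_def using i by (auto simp: nth_append)
  have A_in: "A ! j \<in> dring m l" "vars (A ! j) \<noteq> {}" if "j < length A" for j
    using A that nth_mem unfolding autoreduced_def by blast+
  have "set B \<subseteq> set A \<union> {f}"
    unfolding B_def using set_take_subset by fastforce
  then have "set B \<subseteq> dring m l" "\<forall>a\<in>set B. vars a \<noteq> {}"
    using A f unfolding autoreduced_def by blast+
  moreover have "prank_less rk (B ! a) (B ! b)" if "a < b" "b < length B" for a b
  proof (cases "b < i")
    case True
    then show ?thesis
      using A that i Bj unfolding autoreduced_def by auto
  next
    case False
    then show ?thesis
      using that lB Bj Bi below by (simp add: less_Suc_eq)
  qed
  moreover have "reduced_wrt rk (B ! a) (B ! b)" if ab: "a < length B" "b < length B" "a \<noteq> b" for a b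
  proof (cases "a < i")
    case a: True
    show ?thesis
    proof (cases "b < i")
      case True
      then show ?thesis
        using A a ab i Bj unfolding autoreduced_def by auto
    next
      case False
      then have "b = i"
        using ab lB by simp
      then show ?thesis
        using prank_less_imp_reduced[OF A_in f below[OF a]] a i Bj Bi by simp
    qed
  next
    case False
    then have "a = i" "b < i"
      using ab lB by auto
    then show ?thesis
      using red i Bj Bi by simp
  qed
  ultimately show ?thesis
    unfolding autoreduced_def B_def[symmetric] by blast
qed

lemma exists_lower_autoreduced:
  fixes A :: "'k::comm_ring_1 dpoly list"
  assumes A: "autoreduced m l rk A"
    and f: "f \<in> dring m l" "vars f \<noteq> {}" and red: "\<forall>k<length A. reduced_wrt rk f (A ! k)"
  shows "\<exists>B. autoreduced m l rk B \<and> set B \<subseteq> set A \<union> {f} \<and> aset_less rk B A"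
proof -
  define i where "i = length (takeWhile (\<lambda>c. prank_less rk c f) A)"
  have i: "i \<le> length A"
    unfolding i_def by (rule length_takeWhile_le)
  have below: "prank_less rk (A ! j) f" if "j < i" for j
    using that unfolding i_def by (metis nth_mem set_takeWhileD takeWhile_nth)
  define B where "B = take i A @ [f]"
  have "autoreduced m l rk B"
    unfolding B_def using autoreduced_take_append[OF A i f below red] .
  moreover have "set B \<subseteq> set A \<union> {f}"
    unfolding B_def using set_take_subset by fastforce
  moreover have "aset_less rk B A"
    unfolding aset_less_def
  proof (intro exI[of _ i] conjI allI impI)
    fix j assume "j < i"
    then show "j < length B" "j < length A" "prank_eq rk (B ! j) (A ! j)"
      unfolding B_def prank_eq_def using i by (auto simp: nth_append)
  next
    show "i < length B \<and> i < length A \<and> prank_less rk (B ! i) (A ! i) \<or> i = length A \<and> i < length B"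
    proof (cases "i < length A")
      case True
      have "A ! i \<in> dring m l" "vars (A ! i) \<noteq> {}"
        using A True nth_mem unfolding autoreduced_def by blast+
      moreover have "\<not> prank_less rk (A ! i) f"
        using True unfolding i_def by (rule nth_length_takeWhile)
      ultimately have "prank_less rk f (A ! i)"
        using reduced_imp_prank_less f red True by blast
      then show ?thesis
        using True i unfolding B_def by (simp add: nth_append)
    next
      case False
      then show ?thesis
        using i unfolding B_def by simp
    qed
  qed
  ultimately show ?thesis
    by blast
qed

end

section \<open>A characteristic set and the truncated ideal\<close>

lemma prod_list_map_remove1:
  fixes f :: "'a \<Rightarrow> 'b::comm_monoid_mult"
  shows "x \<in> set xs \<Longrightarrow> prod_list (map f xs) = f x * prod_list (map f (remove1 x xs))"
  by (induction xs) (auto simp: ac_simps)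

locale char_set = ranking m l rk for m l :: nat and rk +
  fixes d :: "nat \<Rightarrow> 'k::field_char_0 \<Rightarrow> 'k" and h :: nat and C :: "'k dpoly list"
  assumes diff_field: "diff_field d m" and orderly: "is_orderly m l rk"
    and characterizable: "characterizable d m l rk (char_ideal d m l rk C)"
    and kolchin_char_set: "kolchin_char_set m l rk (char_ideal d m l rk C) C"
    and order_bound: "order_bound h C"
begin

abbreviation J :: "'k dpoly set" where "J \<equiv> char_ideal d m l rk C"
abbreviation H :: "'k dpoly" where "H \<equiv> H_of rk C"
abbreviation R :: "'k dpoly set" where "R \<equiv> dring m l"
abbreviation Rh :: "'k dpoly set" where "Rh \<equiv> dring_h m l h"
abbreviation ld :: "nat \<Rightarrow> dvar" where "ld k \<equiv> leader rk (C ! k)"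

definition truncated_gens :: "'k dpoly set" where
  "truncated_gens = {apply_op d m \<theta> (C ! j) | \<theta> j. j < length C \<and> valid_op m \<theta> \<and>
     var_ord (apply_op_var \<theta> (leader rk (C ! j))) \<le> h}"

abbreviation truncated_base :: "'k dpoly set" where
  "truncated_base \<equiv> ideal_gen Rh truncated_gens"

lemma truncated_ideal_eq: "truncated_ideal d m l rk h C = saturation Rh truncated_base H"
  unfolding truncated_ideal_def truncated_gens_def ..

lemma R_eq: "R = polys_in {x. valid x}"
  by (rule dring_eq_polys_in)

lemma Rh_eq: "Rh = polys_in {x. valid x \<and> var_ord x \<le> h}"
  by (rule dring_h_eq_polys_in)

lemma in_Rh_iff: "p \<in> Rh \<longleftrightarrow> (\<forall>x\<in>vars p. valid x \<and> var_ord x \<le> h)"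
  unfolding Rh_eq polys_in_def by blast

lemma Rh_subset_R: "p \<in> Rh \<Longrightarrow> p \<in> R"
  using dring_h_subset_dring by blast

lemma J_is_diff_ideal: "is_diff_ideal d m l J"
  using characterizable unfolding characterizable_def by blast

lemma J_is_ideal: "is_ideal_in R J"
  using J_is_diff_ideal unfolding is_diff_ideal_def by blast

lemma J_mult: "a \<in> J \<Longrightarrow> r \<in> R \<Longrightarrow> r * a \<in> J"
  using is_ideal_in_mult[OF J_is_ideal] by blast

lemma J_diff: "a \<in> J \<Longrightarrow> b \<in> J \<Longrightarrow> a - b \<in> J"
  using is_ideal_in_polys_in_diff J_is_ideal unfolding R_eq by blast

lemma autoreduced_C: "autoreduced m l rk C"
  using kolchin_char_set unfolding kolchin_char_set_def by blast

lemma C_subset_J: "set C \<subseteq> J"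
  using kolchin_char_set unfolding kolchin_char_set_def by blast

lemma C_in_R: "c \<in> set C \<Longrightarrow> c \<in> R"
  and C_nonconst: "c \<in> set C \<Longrightarrow> vars c \<noteq> {}"
  using autoreduced_C unfolding autoreduced_def by blast+

lemma C_in_Rh: "c \<in> set C \<Longrightarrow> c \<in> Rh"
  using C_in_R order_bound unfolding order_bound_def dring_h_def by blast

lemma reduced_C: "i < length C \<Longrightarrow> j < length C \<Longrightarrow> i \<noteq> j \<Longrightarrow> reduced_wrt rk (C ! i) (C ! j)"
  using autoreduced_C unfolding autoreduced_def by blast

lemma leader_C:
  assumes "k < length C"
  shows "ld k \<in> vars (C ! k)" "\<forall>v\<in>vars (C ! k). rk v (ld k)" "valid (ld k)"
  using leader_spec[OF C_in_R C_nonconst] assms by auto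

lemma ld_inj: "i < length C \<Longrightarrow> j < length C \<Longrightarrow> ld i = ld j \<Longrightarrow> i = j"
  using reduced_C[of i j] reduced_C[of j i] unfolding reduced_wrt_def by fastforce

lemma ld_not_proper_derivative:
  "k < length C \<Longrightarrow> k' < length C \<Longrightarrow> \<not> is_proper_derivative (ld k) (ld k')"
  using reduced_C[of k k'] leader_C(1)[of k] not_proper_derivative_self
  unfolding reduced_wrt_def by metis

lemma initial_in_Rh: "c \<in> set C \<Longrightarrow> initial rk c \<in> Rh"
  unfolding Rh_eq initial_def lcoeff_in_eq_coeff_in
  using C_in_Rh vars_coeff_in by (metis Rh_eq Diff_subset order.trans polys_in_vars_subset)

lemma separant_in_Rh: "c \<in> set C \<Longrightarrow> separant rk c \<in> Rh"
  unfolding Rh_eq separant_def using C_in_Rh vars_pderiv_var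
  by (metis Rh_eq polys_in_vars_subset)

lemma H_factor:
  assumes "c \<in> set C"
  shows "\<exists>X\<in>Rh. H = initial rk c * X" "\<exists>X\<in>Rh. H = separant rk c * X"
proof -
  define P where "P = prod_list (map (\<lambda>c. initial rk c * separant rk c) (remove1 c C))"
  have H: "H = initial rk c * separant rk c * P"
    unfolding H_of_def P_def using prod_list_map_remove1[OF assms] .
  have "P \<in> Rh"
    unfolding P_def Rh_eq using initial_in_Rh separant_in_Rh
    by (intro polys_in_prod_list polys_in_mult) (auto simp: Rh_eq dest: set_remove1_subset[THEN subsetD])
  then have "separant rk c * P \<in> Rh" "initial rk c * P \<in> Rh"
    using initial_in_Rh[OF assms] separant_in_Rh[OF assms] unfolding Rh_eq by (auto intro: polys_in_mult)
  moreover have "H = initial rk c * (separant rk c * P)" "H = separant rk c * (initial rk c * P)"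
    using H by (simp_all add: ac_simps)
  ultimately show "\<exists>X\<in>Rh. H = initial rk c * X" "\<exists>X\<in>Rh. H = separant rk c * X"
    by blast+
qed

lemma H_in_Rh: "H \<in> Rh"
  unfolding H_of_def Rh_eq using initial_in_Rh separant_in_Rh
  by (intro polys_in_prod_list polys_in_mult) (auto simp: Rh_eq)

text \<open>The orderly ranking is what keeps the truncated generators inside \<open>R\<^sub>h\<close>:
  every derivative of \<open>\<theta>C\<^sup>j\<close> ranks at most \<open>\<theta>u\<^sub>j\<close>, hence has order at most \<open>h\<close>.\<close>

lemma truncated_gens_subset_Rh: "truncated_gens \<subseteq> Rh"
proof
  fix g assume "g \<in> truncated_gens"
  then obtain \<theta> j where g: "g = apply_op d m \<theta> (C ! j)" "j < length C" "valid_op m \<theta>"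
      "var_ord (apply_op_var \<theta> (ld j)) \<le> h"
    unfolding truncated_gens_def by blast
  have w: "valid (apply_op_var \<theta> (ld j))"
    using valid_var_apply_op_var[OF g(3) leader_C(3)[OF g(2)]] .
  show "g \<in> Rh"
    unfolding in_Rh_iff
  proof
    fix x assume "x \<in> vars g"
    then have "valid x \<and> rk x (apply_op_var \<theta> (ld j))"
      using vars_apply_op[OF C_in_R[OF nth_mem] C_nonconst[OF nth_mem] g(3)] g(1,2) by auto
    then show "valid x \<and> var_ord x \<le> h"
      using orderly_var_ord_le[OF orderly _ w] g(4) by fastforce
  qed
qed

lemma truncated_gens_subset_J: "truncated_gens \<subseteq> J"
  unfolding truncated_gens_def
  using diff_ideal_apply_op[OF J_is_diff_ideal] C_subset_J nth_mem by blast

lemma truncated_base_is_ideal: "is_ideal_in Rh truncated_base"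
  unfolding Rh_eq using truncated_gens_subset_Rh[unfolded Rh_eq] by (rule ideal_gen_polys_in_is_ideal)

lemma truncated_gens_subset_base: "truncated_gens \<subseteq> truncated_base"
  by (rule ideal_gen_superset)

lemma truncated_base_subset_J: "truncated_base \<subseteq> J \<inter> Rh"
proof (rule ideal_gen_least)
  show "is_ideal_in Rh (J \<inter> Rh)"
    using is_ideal_in_zero[OF J_is_ideal] is_ideal_in_add[OF J_is_ideal] J_mult Rh_subset_R
    unfolding is_ideal_in_def Rh_eq by (auto intro: polys_in_add polys_in_mult)
  show "truncated_gens \<subseteq> J \<inter> Rh"
    using truncated_gens_subset_J truncated_gens_subset_Rh by blast
qed

lemma reduced_nonconst_notin_J:
  assumes "f \<in> J" "f \<in> R" "vars f \<noteq> {}" "\<forall>k<length C. reduced_wrt rk f (C ! k)"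
  shows False
  using exists_lower_autoreduced[OF autoreduced_C assms(2-4)] assms(1) C_subset_J kolchin_char_set
  unfolding kolchin_char_set_def by blast

text \<open>If \<open>1 \<in> J\<close>, every \<open>y\<^sub>j\<close> lies in \<open>J\<close> and is not reduced with respect to \<open>C\<close>; this forces
  \<open>C\<close> to consist of one polynomial \<open>a y\<^sub>j + b\<close> (\<open>a, b \<in> k\<close>, \<open>a \<noteq> 0\<close>) for each \<open>j\<close>.\<close>

lemma unit_J_order_zero_leader:
  assumes one: "1 \<in> J" and j: "j < l"
  shows "\<exists>k<length C. ld k = (0, j) \<and> deg_in (0, j) (C ! k) = 1"
proof -
  let ?z = "(0 :: dop, j)" and ?y = "pvar (0 :: dop, j) :: 'k dpoly"
  have yR: "?y \<in> R"
    using j unfolding dring_def valid_var_def by simp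
  then have "?y \<in> J"
    using J_mult[OF one] by simp
  then have "\<not> (\<forall>k<length C. reduced_wrt rk ?y (C ! k))"
    using reduced_nonconst_notin_J[OF _ yR] by auto
  then obtain k where k: "k < length C" "\<not> reduced_wrt rk ?y (C ! k)"
    by blast
  have "\<not> is_proper_derivative ?z u" for u
  proof
    assume "is_proper_derivative ?z u"
    then obtain \<theta> where "\<theta> \<noteq> 0" "\<theta> + fst u = 0"
      unfolding is_proper_derivative_def apply_op_var_def by auto
    moreover from this(2) have "\<theta> = 0"
      by (intro poly_mapping_eqI) (metis add_is_0 lookup_add lookup_zero)
    ultimately show False
      by simp
  qed
  then have deg: "deg_in (ld k) (C ! k) \<le> deg_in (ld k) ?y"
    using k(2) unfolding reduced_wrt_def by auto
  then have "ld k \<in> vars ?y"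
    using deg_in_pos[OF leader_C(1)[OF k(1)]] deg_in_notin by fastforce
  then have "ld k = ?z"
    by simp
  moreover have "deg_in ?z ?y = 1"
    using deg_in_pvar_power[of ?z 1] by simp
  ultimately have "deg_in ?z (C ! k) = 1"
    using deg deg_in_pos[OF leader_C(1)[OF k(1)]] by simp
  then show ?thesis
    using k(1) \<open>ld k = ?z\<close> by blast
qed

lemma unit_J_leader:
  assumes one: "1 \<in> J" and k: "k < length C"
  shows "fst (ld k) = 0" "deg_in (ld k) (C ! k) = 1"
proof -
  obtain \<theta> j where ld: "ld k = (\<theta>, j)"
    by (cases "ld k")
  then have "j < l"
    using leader_C(3)[OF k] unfolding valid_var_def by auto
  then obtain k' where k': "k' < length C" "ld k' = (0, j)" "deg_in (0, j) (C ! k') = 1"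
    using unit_J_order_zero_leader[OF one] by blast
  have "\<theta> = 0"
  proof (rule ccontr)
    assume "\<theta> \<noteq> 0"
    then have "is_proper_derivative (ld k) (ld k')"
      unfolding is_proper_derivative_def apply_op_var_def using ld k'(2) by auto
    then show False
      using ld_not_proper_derivative[OF k k'(1)] by blast
  qed
  then have "k = k'"
    using ld_inj[OF k k'(1)] ld k'(2) by simp
  then show "fst (ld k) = 0" "deg_in (ld k) (C ! k) = 1"
    using k' ld \<open>\<theta> = 0\<close> by simp_all
qed

lemma unit_J_vars:
  assumes one: "1 \<in> J" and k: "k < length C"
  shows "vars (C ! k) \<subseteq> {ld k}"
proof
  fix x assume x: "x \<in> vars (C ! k)"
  have vx: "valid x"
    using vars_valid[OF C_in_R[OF nth_mem[OF k]] x] .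
  obtain \<theta> j where xe: "x = (\<theta>, j)"
    by (cases x)
  then have "j < l"
    using vx unfolding valid_var_def by auto
  then obtain k' where k': "k' < length C" "ld k' = (0, j)" "deg_in (0, j) (C ! k') = 1"
    using unit_J_order_zero_leader[OF one] by blast
  show "x \<in> {ld k}"
  proof (cases "\<theta> = 0")
    case False
    then have pd: "is_proper_derivative x (ld k')"
      unfolding is_proper_derivative_def apply_op_var_def using xe k'(2) by auto
    show ?thesis
    proof (cases "k' = k")
      case True
      then have "rk_less rk (ld k) x"
        using rk_less_proper_derivative[OF pd vx leader_C(3)[OF k'(1)]] by simp
      then show ?thesis
        using leader_C(2)[OF k] x rk_less_iff_not_rk[OF leader_C(3)[OF k] vx] by blast
    next
      case False
      then show ?thesis
        using reduced_C[OF k k'(1)] x pd unfolding reduced_wrt_def by auto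
    qed
  next
    case True
    then have xk': "x = ld k'"
      using xe k'(2) by simp
    show ?thesis
    proof (cases "k' = k")
      case False
      then have "deg_in (ld k') (C ! k) < 1"
        using reduced_C[OF k k'(1)] k'(2,3) unfolding reduced_wrt_def by auto
      then show ?thesis
        using deg_in_pos x xk' by fastforce
    qed (use xk' in simp)
  qed
qed

lemma unit_J_linear:
  assumes one: "1 \<in> J" and k: "k < length C"
  defines "a \<equiv> lookup (C ! k) (single (ld k) 1)" and "b \<equiv> lookup (C ! k) 0"
  shows "C ! k = single (single (ld k) 1) a + single 0 b" "a \<noteq> 0"
  using linear_poly[OF unit_J_vars[OF one k] _ leader_C(1)[OF k]] unit_J_leader(2)[OF one k]
  unfolding a_def b_def by simp_all

text \<open>The common zero: \<open>y\<^sub>j\<close> is sent to the root \<open>c\<^sub>j\<close> of the element \<open>a y\<^sub>j + b\<close> of \<open>C\<close>, and \<open>\<theta> y\<^sub>j\<close>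
  to \<open>\<theta> c\<^sub>j\<close>.\<close>

lemma unit_J_common_zero:
  assumes one: "1 \<in> J"
  obtains val where "\<And>i x. i < m \<Longrightarrow> val (deriv_var i x) = d i (val x)"
    "\<forall>c\<in>set C. c \<in> R \<and> eval_poly val c = 0"
    "\<And>c. c \<in> set C \<Longrightarrow> eval_poly val (initial rk c * separant rk c) \<noteq> 0"
proof -
  define a where "a k = lookup (C ! k) (single (ld k) 1)" for k
  define b where "b k = lookup (C ! k) 0" for k
  note lin = unit_J_linear[OF one, folded a_def b_def]
  define kk where "kk j = (SOME k. k < length C \<and> ld k = (0, j))" for j
  define val where "val x = apply_op_const d m (fst x) (- b (kk (snd x)) / a (kk (snd x)))" for x
  have comm: "\<And>c i j. i < m \<Longrightarrow> j < m \<Longrightarrow> d i (d j c) = d j (d i c)"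
    using diff_field unfolding diff_field_def by blast
  have "val (deriv_var i x) = d i (val x)" if "i < m" for i x
    unfolding val_def apply_op_var_def using apply_op_const_deriv[where d = d and m = m, OF comm that] by simp
  moreover have "c \<in> R \<and> eval_poly val c = 0" if c: "c \<in> set C" for c
  proof -
    from in_set_conv_nth[THEN iffD1, OF c] obtain k where k: "k < length C" "C ! k = c"
      by blast
    obtain j where j: "ld k = (0, j)"
      using unit_J_leader(1)[OF one k(1)] by (cases "ld k") auto
    have "kk j < length C \<and> ld (kk j) = (0, j)"
      unfolding kk_def by (rule someI[of _ k]) (use k j in simp)
    then have "kk j = k"
      using ld_inj[OF _ k(1)] j by auto
    then have "eval_poly val (C ! k) = a k * (- b k / a k) + b k"
      by (subst lin(1)[OF k(1)]) (simp add: eval_poly_add eval_poly_single val_def j)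
    then show ?thesis
      using lin(2)[OF k(1)] C_in_R[OF c] k(2) by simp
  qed
  moreover have "eval_poly val (initial rk c * separant rk c) \<noteq> 0" if c: "c \<in> set C" for c
  proof -
    from in_set_conv_nth[THEN iffD1, OF c] obtain k where k: "k < length C" "C ! k = c"
      by blast
    have "initial rk c = single 0 (a k)" "separant rk c = single 0 (a k)"
      unfolding k(2)[symmetric] by (rule linear_poly_initial_separant[OF lin[OF k(1)] refl])+
    then show ?thesis
      using lin(2)[OF k(1)] by (simp add: eval_poly_mult)
  qed
  ultimately show ?thesis
    using that by blast
qed

lemma one_notin_J: "1 \<notin> J"
proof
  assume one: "1 \<in> J"
  obtain val where val: "\<And>i x. i < m \<Longrightarrow> val (deriv_var i x) = d i (val x)"
      "\<forall>c\<in>set C. c \<in> R \<and> eval_poly val c = 0"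
      "\<And>c. c \<in> set C \<Longrightarrow> eval_poly val (initial rk c * separant rk c) \<noteq> 0"
    using unit_J_common_zero[OF one] by blast
  have "0 \<notin> set (map (\<lambda>c. eval_poly val (initial rk c * separant rk c)) C)"
    using val(3) by force
  then have H: "eval_poly val H \<noteq> 0"
    unfolding H_of_def eval_poly_prod_list by (simp only: prod_list_zero_iff not_False_eq_True)
  obtain n where "H ^ n * 1 \<in> diff_ideal_gen d m l (set C)"
    using one unfolding char_ideal_def saturation_def by blast
  then have "eval_poly val (H ^ n * 1) = 0"
    using diff_ideal_gen_eval_zero[OF diff_field val(1,2)] by blast
  with H show False
    by (simp add: eval_poly_power)
qed

lemma reduced_in_J_eq_0:
  assumes "f \<in> J" "f \<in> R" "\<forall>k<length C. reduced_wrt rk f (C ! k)"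
  shows "f = 0"
proof (rule ccontr)
  assume "f \<noteq> 0"
  have "vars f = {}"
    using reduced_nonconst_notin_J assms by blast
  then have f: "f = single 0 (lookup f 0)"
    by (rule vars_empty_imp_const)
  with \<open>f \<noteq> 0\<close> have "lookup f 0 \<noteq> 0"
    by (metis single_zero)
  then have "single 0 (inverse (lookup f 0)) * f = 1"
    by (subst f) (simp add: mult_single)
  moreover have "single 0 (inverse (lookup f 0)) * f \<in> J"
    using J_mult[OF assms(1)] unfolding R_eq by simp
  ultimately show False
    using one_notin_J by simp
qed

definition unreduced :: "'k dpoly \<Rightarrow> dvar set" where
  "unreduced f = {w \<in> vars f. (\<exists>k<length C. is_proper_derivative w (ld k)) \<or>
     (\<exists>k<length C. w = ld k \<and> deg_in (ld k) (C ! k) \<le> deg_in w f)}"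

lemma unreduced_subset_vars: "unreduced f \<subseteq> vars f"
  unfolding unreduced_def by blast

lemma unreduced_empty_imp_reduced:
  assumes "unreduced f = {}" "k < length C"
  shows "reduced_wrt rk f (C ! k)"
proof -
  have "deg_in (ld k) f < deg_in (ld k) (C ! k)"
  proof (cases "ld k \<in> vars f")
    case True
    then show ?thesis
      using assms unfolding unreduced_def by fastforce
  next
    case False
    then show ?thesis
      using deg_in_notin[OF False] deg_in_pos[OF leader_C(1)[OF assms(2)]] by simp
  qed
  moreover have "\<forall>v\<in>vars f. \<not> is_proper_derivative v (ld k)"
    using assms unfolding unreduced_def by blast
  ultimately show ?thesis
    unfolding reduced_wrt_def by blast
qed

lemma unreduced_deg_mono:
  "w \<in> unreduced r \<Longrightarrow> w \<in> vars f \<Longrightarrow> deg_in w r \<le> deg_in w f \<Longrightarrow> w \<in> unreduced f"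
  unfolding unreduced_def by fastforce

lemma unreduced_pseudo_remainder:
  assumes v: "v \<in> unreduced f" "\<forall>w\<in>unreduced f. rk w v" "valid v"
    and f: "\<forall>x\<in>vars f. valid x" and V: "\<forall>x\<in>V. valid x \<and> rk x v"
    and r: "vars r \<subseteq> vars f \<union> V \<union> {v}" "\<forall>w. w \<notin> V \<union> {v} \<longrightarrow> deg_in w r \<le> deg_in w f"
      "v \<notin> unreduced r"
  shows "\<forall>w\<in>unreduced r. rk_less rk w v"
proof
  fix w assume w: "w \<in> unreduced r"
  then have "w \<noteq> v" "w \<in> vars f \<union> V"
    using r(1,3) unreduced_subset_vars by blast+
  show "rk_less rk w v"
  proof (cases "w \<in> V")
    case True
    then show ?thesis
      using V \<open>w \<noteq> v\<close> unfolding rk_less_def by blast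
  next
    case False
    then have "w \<in> unreduced f"
      using unreduced_deg_mono[OF w] r(2) \<open>w \<noteq> v\<close> \<open>w \<in> vars f \<union> V\<close> by blast
    then show ?thesis
      using v(2) \<open>w \<noteq> v\<close> unfolding rk_less_def by blast
  qed
qed

lemma reduction_step_by:
  assumes f: "f \<in> Rh" "f \<in> J" and v: "v \<in> unreduced f" "\<forall>w\<in>unreduced f. rk w v"
    and g: "g = I * pvar v ^ e + g0" "g \<in> truncated_base" "deg_in v g0 < e" "v \<notin> vars I"
    and lower: "\<forall>x\<in>vars I \<union> vars g0. valid x \<and> rk x v" and HI: "\<exists>X\<in>Rh. H = I * X"
    and removes: "\<And>r. deg_in v r < e \<Longrightarrow> v \<notin> unreduced r"
  shows "\<exists>a X f1. f1 \<in> Rh \<and> f1 \<in> J \<and> X \<in> Rh \<and> (\<forall>w\<in>unreduced f1. rk_less rk w v)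
    \<and> H ^ a * f - X * f1 \<in> truncated_base"
proof -
  have vv: "valid v" "var_ord v \<le> h"
    using f(1) v(1) unreduced_subset_vars unfolding in_Rh_iff by blast+
  obtain a q r where qr: "I ^ a * f = q * g + r" "deg_in v r < e"
      "vars q \<union> vars r \<subseteq> vars f \<union> vars I \<union> vars g0 \<union> {v}"
      "\<forall>w. w \<notin> vars I \<union> vars g0 \<union> {v} \<longrightarrow> deg_in w r \<le> deg_in w f"
    using pseudo_division[OF g(1) g(4) g(3)] by blast
  have "\<forall>x\<in>vars f \<union> vars I \<union> vars g0 \<union> {v}. valid x \<and> var_ord x \<le> h"
    using lower f(1) vv orderly_var_ord_le[OF orderly _ vv(1)] unfolding in_Rh_iff by fastforce
  then have q: "q \<in> Rh" and r: "r \<in> Rh"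
    using qr(3) unfolding in_Rh_iff by blast+
  have I: "I \<in> R"
    using lower unfolding R_eq polys_in_def by blast
  have "r = I ^ a * f - q * g"
    using qr(1) by simp
  moreover have "I ^ a * f \<in> J" "q * g \<in> J"
    using J_mult f(2) g(2) truncated_base_subset_J Rh_subset_R[OF q] I
    unfolding R_eq by (auto simp: mult.commute intro: polys_in_power)
  ultimately have "r \<in> J"
    using J_diff by simp
  obtain X where X: "X \<in> Rh" "H = I * X"
    using HI by blast
  have "H ^ a * f = X ^ a * (I ^ a * f)"
    unfolding X(2) power_mult_distrib by (simp add: ac_simps)
  then have "H ^ a * f - X ^ a * r = (X ^ a * q) * g"
    unfolding qr(1) by (simp add: algebra_simps)
  moreover have "(X ^ a * q) * g \<in> truncated_base"
    using is_ideal_in_mult[OF truncated_base_is_ideal g(2)] X(1) q unfolding Rh_eq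
    by (simp add: polys_in_mult polys_in_power)
  moreover have "X ^ a \<in> Rh"
    using X(1) unfolding Rh_eq by (rule polys_in_power)
  moreover have "\<forall>w\<in>unreduced r. rk_less rk w v"
  proof (rule unreduced_pseudo_remainder[OF v vv(1) _ lower _ qr(4) removes[OF qr(2)]])
    show "\<forall>x\<in>vars f. valid x"
      using f(1) unfolding in_Rh_iff by blast
    show "vars r \<subseteq> vars f \<union> (vars I \<union> vars g0) \<union> {v}"
      using qr(3) by blast
  qed
  ultimately show ?thesis
    using r \<open>r \<in> J\<close> by metis
qed

lemma reduction_step_proper_derivative:
  assumes f: "f \<in> Rh" "f \<in> J" and v: "v \<in> unreduced f" "\<forall>w\<in>unreduced f. rk w v"
    and k: "k < length C" "is_proper_derivative v (ld k)"
  shows "\<exists>a X f1. f1 \<in> Rh \<and> f1 \<in> J \<and> X \<in> Rh \<and> (\<forall>w\<in>unreduced f1. rk_less rk w v)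
    \<and> H ^ a * f - X * f1 \<in> truncated_base"
proof -
  have vv: "valid v" "var_ord v \<le> h"
    using f(1) v(1) unreduced_subset_vars unfolding in_Rh_iff by blast+
  obtain \<theta> where th: "\<theta> \<noteq> 0" "valid_op m \<theta>" "v = apply_op_var \<theta> (ld k)"
    using is_proper_derivativeE[OF k(2) vv(1)] by blast
  have ck: "C ! k \<in> set C"
    using k(1) by simp
  obtain T where T: "apply_op d m \<theta> (C ! k) = separant rk (C ! k) * pvar v + T" "lower_than T v"
    using apply_op_shape[OF C_in_R[OF ck] C_nonconst[OF ck] th(2,1)] th(3) by metis
  have S: "rk_less rk x v" if "x \<in> vars (separant rk (C ! k))" for x
  proof -
    have "x \<in> vars (C ! k)"
      using that vars_pderiv_var unfolding separant_def by blast
    then show ?thesis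
      using leader_C[OF k(1)] vars_valid[OF C_in_R[OF ck]] rk_less_apply_op_var[OF th(2,1)] th(3)
        rk_le_less_trans[OF _ leader_C(3)[OF k(1)] vv(1)] by blast
  qed
  show ?thesis
  proof (rule reduction_step_by[OF f v])
    show "apply_op d m \<theta> (C ! k) = separant rk (C ! k) * pvar v ^ 1 + T"
      using T(1) by simp
    show "apply_op d m \<theta> (C ! k) \<in> truncated_base"
      using k(1) th vv(2) truncated_gens_subset_base unfolding truncated_gens_def by blast
    show "deg_in v T < 1"
      using T(2) deg_in_notin unfolding lower_than_def rk_less_def by fastforce
    show "v \<notin> vars (separant rk (C ! k))"
      using S unfolding rk_less_def by blast
    show "\<forall>x\<in>vars (separant rk (C ! k)) \<union> vars T. valid x \<and> rk x v"
      using S T(2) vars_pderiv_var vars_valid[OF C_in_R[OF ck]]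
      unfolding lower_than_def rk_less_def separant_def by blast
    show "\<exists>X\<in>Rh. H = separant rk (C ! k) * X"
      using H_factor(2)[OF ck] .
    show "v \<notin> unreduced r" if "deg_in v r < 1" for r
      using that deg_in_pos unreduced_subset_vars by fastforce
  qed
qed

lemma reduction_step_leader:
  assumes f: "f \<in> Rh" "f \<in> J" and v: "v \<in> unreduced f" "\<forall>w\<in>unreduced f. rk w v"
    and k: "k < length C" "v = ld k"
  shows "\<exists>a X f1. f1 \<in> Rh \<and> f1 \<in> J \<and> X \<in> Rh \<and> (\<forall>w\<in>unreduced f1. rk_less rk w v)
    \<and> H ^ a * f - X * f1 \<in> truncated_base"
proof -
  have vv: "var_ord v \<le> h"
    using f(1) v(1) unreduced_subset_vars unfolding in_Rh_iff by blast
  have ck: "C ! k \<in> set C"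
    using k(1) by simp
  define e where "e = deg_in v (C ! k)"
  have init: "initial rk (C ! k) = coeff_in v e (C ! k)"
    unfolding initial_def lcoeff_in_eq_coeff_in e_def k(2) ..
  show ?thesis
  proof (rule reduction_step_by[OF f v])
    show "C ! k = initial rk (C ! k) * pvar v ^ e + rest_in v e (C ! k)"
      unfolding init by (rule coeff_in_decomp)
    have "apply_op d m 0 (C ! k) \<in> truncated_gens"
      using k vv unfolding truncated_gens_def by (intro CollectI exI[of _ 0] exI[of _ k]) simp
    then show "C ! k \<in> truncated_base"
      using truncated_gens_subset_base by auto
    show "deg_in v (rest_in v e (C ! k)) < e"
      using deg_in_rest_in_less[of v "C ! k" e] deg_in_pos[OF leader_C(1)[OF k(1)]] k(2)
      unfolding e_def by simp
    show "v \<notin> vars (initial rk (C ! k))"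
      unfolding init using vars_coeff_in by blast
    show "\<forall>x\<in>vars (initial rk (C ! k)) \<union> vars (rest_in v e (C ! k)). valid x \<and> rk x v"
      using leader_C[OF k(1)] vars_valid[OF C_in_R[OF ck]] vars_rest_in vars_coeff_in k(2)
      unfolding init by blast
    show "\<exists>X\<in>Rh. H = initial rk (C ! k) * X"
      using H_factor(1)[OF ck] .
    show "v \<notin> unreduced r" if "deg_in v r < e" for r
    proof
      assume "v \<in> unreduced r"
      then obtain k' where "k' < length C" "v = ld k'" "deg_in (ld k') (C ! k') \<le> deg_in v r"
        using k ld_not_proper_derivative unfolding unreduced_def by blast
      then show False
        using that ld_inj[OF _ k(1)] k(2) unfolding e_def by fastforce
    qed
  qed
qed

lemma reduction_step:
  assumes f: "f \<in> Rh" "f \<in> J" and v: "v \<in> unreduced f" "\<forall>w\<in>unreduced f. rk w v"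
  shows "\<exists>a X f1. f1 \<in> Rh \<and> f1 \<in> J \<and> X \<in> Rh \<and> (\<forall>w\<in>unreduced f1. rk_less rk w v)
    \<and> H ^ a * f - X * f1 \<in> truncated_base"
proof -
  consider k where "k < length C" "is_proper_derivative v (ld k)" | k where "k < length C" "v = ld k"
    using v(1) unfolding unreduced_def by blast
  then show ?thesis
    by cases (fact reduction_step_proper_derivative[OF f v] reduction_step_leader[OF f v])+
qed

definition rank_index :: "dvar \<Rightarrow> nat" where
  "rank_index w = card {x. (valid x \<and> var_ord x \<le> h) \<and> rk_less rk x w}"

lemma rank_index_less:
  assumes "valid w" "valid v" "var_ord w \<le> h" "rk_less rk w v"
  shows "rank_index w < rank_index v"
  unfolding rank_index_def
proof (rule psubset_card_mono)
  show "finite {x. (valid x \<and> var_ord x \<le> h) \<and> rk_less rk x v}"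
    using finite_bounded_vars[of m l h] by (rule finite_subset[rotated]) blast
  show "{x. (valid x \<and> var_ord x \<le> h) \<and> rk_less rk x w} \<subset> {x. (valid x \<and> var_ord x \<le> h) \<and> rk_less rk x v}"
    using assms rk_less_trans unfolding rk_less_def by blast
qed

lemma reduction_step_rank_index:
  assumes f: "f \<in> Rh" "f \<in> J" "unreduced f \<noteq> {}" and n: "\<forall>w\<in>unreduced f. rank_index w < Suc n"
  obtains a X f1 where "f1 \<in> Rh" "f1 \<in> J" "X \<in> Rh" "\<forall>w\<in>unreduced f1. rank_index w < n"
    "H ^ a * f - X * f1 \<in> truncated_base"
proof -
  have Vh: "\<forall>x\<in>unreduced f. valid x \<and> var_ord x \<le> h"
    using f(1) unreduced_subset_vars unfolding in_Rh_iff by blast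
  then obtain v where v: "v \<in> unreduced f" "\<forall>w\<in>unreduced f. rk w v"
    using exists_rk_greatest[OF finite_subset[OF unreduced_subset_vars finite_vars] f(3)] by blast
  then obtain a X f1 where step: "f1 \<in> Rh" "f1 \<in> J" "X \<in> Rh" "\<forall>w\<in>unreduced f1. rk_less rk w v"
      "H ^ a * f - X * f1 \<in> truncated_base"
    using reduction_step[OF f(1,2)] by blast
  have "rank_index w < n" if w: "w \<in> unreduced f1" for w
  proof -
    have "valid w \<and> var_ord w \<le> h"
      using w step(1) unreduced_subset_vars unfolding in_Rh_iff by blast
    then have "rank_index w < rank_index v"
      using rank_index_less step(4) w Vh v(1) by blast
    then show ?thesis
      using n v(1) by fastforce
  qed
  then show ?thesis
    using that step by blast
qed

lemma truncated_base_combine: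
  assumes "H ^ a * f - X * f1 \<in> truncated_base" "X \<in> Rh" "H ^ N * f1 \<in> truncated_base"
  shows "H ^ (N + a) * f \<in> truncated_base"
proof -
  have "H ^ N \<in> Rh"
    using H_in_Rh unfolding Rh_eq by (rule polys_in_power)
  then have "H ^ N * (H ^ a * f - X * f1) + X * (H ^ N * f1) \<in> truncated_base"
    using is_ideal_in_add[OF truncated_base_is_ideal] is_ideal_in_mult[OF truncated_base_is_ideal] assms
    by blast
  moreover have "H ^ (N + a) * f = H ^ N * (H ^ a * f - X * f1) + X * (H ^ N * f1)"
    by (simp add: algebra_simps power_add)
  ultimately show ?thesis
    by simp
qed

lemma no_unreduced_imp_zero: "f \<in> Rh \<Longrightarrow> f \<in> J \<Longrightarrow> unreduced f = {} \<Longrightarrow> f = 0"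
  using reduced_in_J_eq_0 unreduced_empty_imp_reduced Rh_subset_R by blast

lemma truncated_reduction:
  assumes "f \<in> Rh" "f \<in> J" "\<forall>w\<in>unreduced f. rank_index w < n"
  shows "\<exists>N. H ^ N * f \<in> truncated_base"
  using assms
proof (induction n arbitrary: f)
  case 0
  then have "f = 0"
    using no_unreduced_imp_zero by blast
  then show ?case
    using is_ideal_in_zero[OF truncated_base_is_ideal] by auto
next
  case (Suc n)
  show ?case
  proof (cases "unreduced f = {}")
    case True
    then have "f = 0"
      using no_unreduced_imp_zero Suc.prems by blast
    then show ?thesis
      using is_ideal_in_zero[OF truncated_base_is_ideal] by auto
  next
    case False
    then obtain a X f1 where step: "f1 \<in> Rh" "f1 \<in> J" "X \<in> Rh" "\<forall>w\<in>unreduced f1. rank_index w < n"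
        "H ^ a * f - X * f1 \<in> truncated_base"
      using reduction_step_rank_index Suc.prems by metis
    then obtain N where "H ^ N * f1 \<in> truncated_base"
      using Suc.IH by blast
    then show ?thesis
      using truncated_base_combine step(3,5) by blast
  qed
qed

lemma J_inter_Rh_eq_truncated_ideal: "J \<inter> Rh = truncated_ideal d m l rk h C"
proof
  show "J \<inter> Rh \<subseteq> truncated_ideal d m l rk h C"
  proof
    fix f assume f: "f \<in> J \<inter> Rh"
    have "finite (rank_index ` unreduced f)"
      using finite_subset[OF unreduced_subset_vars finite_vars] by blast
    then have "\<forall>w\<in>unreduced f. rank_index w < Suc (Max (rank_index ` unreduced f))"
      by (simp add: le_imp_less_Suc)
    then obtain N where "H ^ N * f \<in> truncated_base"
      using truncated_reduction f by blast
    then show "f \<in> truncated_ideal d m l rk h C"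
      unfolding truncated_ideal_eq saturation_def using f by blast
  qed
  show "truncated_ideal d m l rk h C \<subseteq> J \<inter> Rh"
  proof
    fix f assume "f \<in> truncated_ideal d m l rk h C"
    then obtain n where f: "f \<in> Rh" "H ^ n * f \<in> truncated_base"
      unfolding truncated_ideal_eq saturation_def by blast
    then have "H ^ n * f \<in> J"
      using truncated_base_subset_J by blast
    then obtain k where "H ^ k * (H ^ n * f) \<in> diff_ideal_gen d m l (set C)"
      unfolding char_ideal_def saturation_def by blast
    then have "H ^ (k + n) * f \<in> diff_ideal_gen d m l (set C)"
      by (simp add: power_add ac_simps)
    then show "f \<in> J \<inter> Rh"
      unfolding char_ideal_def saturation_def using f(1) Rh_subset_R by blast
  qed
qed

lemma truncated_ideal_is_ideal: "is_ideal_in Rh (truncated_ideal d m l rk h C)"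
  unfolding truncated_ideal_eq
  using saturation_is_ideal truncated_base_is_ideal H_in_Rh unfolding Rh_eq by blast

end

lemma char_ideal_inter_dring_h:
  assumes "diff_field d m" "is_ranking m l rk" "is_orderly m l rk"
    and "characterizable d m l rk (char_ideal d m l rk C)"
    and "kolchin_char_set m l rk (char_ideal d m l rk C) C" and "order_bound h C"
  shows "char_ideal d m l rk C \<inter> dring_h m l h = truncated_ideal d m l rk h C"
proof -
  interpret char_set m l rk d h C
    using assms by unfold_locales
  show ?thesis
    by (rule J_inter_Rh_eq_truncated_ideal)
qed

lemma char_decomposition_inter_dring_h:
  assumes "diff_field d m" "is_ranking m l rk" "is_orderly m l rk"
    and Cs: "\<forall>i<n. characterizable d m l rk (char_ideal d m l rk (Cs i))
      \<and> kolchin_char_set m l rk (char_ideal d m l rk (Cs i)) (Cs i) \<and> order_bound h (Cs i)"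
  shows "dring m l \<inter> (\<Inter>i<n. char_ideal d m l rk (Cs i)) \<inter> dring_h m l h
    = dring_h m l h \<inter> (\<Inter>i<n. truncated_ideal d m l rk h (Cs i))"
proof -
  have "dring m l \<inter> (\<Inter>i<n. char_ideal d m l rk (Cs i)) \<inter> dring_h m l h
      = dring_h m l h \<inter> (\<Inter>i<n. char_ideal d m l rk (Cs i) \<inter> dring_h m l h)"
    using dring_h_subset_dring by auto
  also have "\<dots> = dring_h m l h \<inter> (\<Inter>i<n. truncated_ideal d m l rk h (Cs i))"
    using char_ideal_inter_dring_h[OF assms(1-3)] Cs
    by (intro arg_cong2[where f = "(\<inter>)"] refl INF_cong) simp_all
  finally show ?thesis .
qed

theorem mainTheorem7:
  fixes d :: "nat \<Rightarrow> 'k::field_char_0 \<Rightarrow> 'k" and m l h :: nat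
    and rk :: "dvar \<Rightarrow> dvar \<Rightarrow> bool" and C :: "'k dpoly list"
  assumes "diff_field d m"
    and "is_ranking m l rk" and "is_orderly m l rk"
    and "characterizable d m l rk (char_ideal d m l rk C)"
    and "kolchin_char_set m l rk (char_ideal d m l rk C) C"
    and "order_bound h C"
  shows "char_ideal d m l rk C \<inter> dring_h m l h = truncated_ideal d m l rk h C
       \<and> is_ideal_in (dring_h m l h) (truncated_ideal d m l rk h C)
       \<and> (\<forall>(I :: 'k dpoly set) (Cs :: nat \<Rightarrow> 'k dpoly list) n.
            is_diff_ideal d m l I \<and> is_radical_in (dring m l) I
            \<and> I = dring m l \<inter> (\<Inter>i<n. char_ideal d m l rk (Cs i))
            \<and> (\<forall>i<n. characterizable d m l rk (char_ideal d m l rk (Cs i))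
                     \<and> kolchin_char_set m l rk (char_ideal d m l rk (Cs i)) (Cs i)
                     \<and> order_bound h (Cs i))
            \<longrightarrow> I \<inter> dring_h m l h = dring_h m l h \<inter> (\<Inter>i<n. truncated_ideal d m l rk h (Cs i)))"
proof -
  interpret char_set m l rk d h C
    using assms by unfold_locales
  show ?thesis
    by (intro conjI allI impI J_inter_Rh_eq_truncated_ideal truncated_ideal_is_ideal, elim conjE)
      (simp add: char_decomposition_inter_dring_h[OF assms(1-3)])
qed

end
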